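(* Let $(\xi,\eta)$ be a random vector with marginal distributions $U$ (of $\xi$) and $V$ (of $\eta$) on $(0,\infty)$, conditionally dependent with a continuous positive function $s_0$ on $(0,\infty)$ (i.e. $\mathrm P(\xi>x\mid\eta=y)\sim\overline U(x)s_0(y)$ uniformly in $y\in D_\eta$), with $U\in\mathscr L$. Let $X=\xi-\eta$, $Y=\eta$, let $F$ and $G$ be the distributions of $X$ and $Y$, and let $s(y)=s_0(y)/\mathrm E s_0(Y)$. Assume $F\in\mathscr R_{-\alpha}$ for some $\alpha\ge0$ with $\overline F(x)\sim x^{-\alpha}L(x)$, $L$ positive slowly varying, $\overline G(x)=o(\overline F(x))$, and either (i) $\mathrm E(Y^{\alpha+\varepsilon}s(Y))<\infty$ for some $\varepsilon>0$, or (ii) there is a positive function $g$ with $g(x)\downarrow0$, $xg(x)\uparrow\infty$, $\overline G(xg(x))=o(\overline F(x))$ and $\limsup_{x\to\infty}\sup_{1\le y\le xg(x)}L(x/y)/L(x)<\infty$, and $\mathrm E(Y^\alpha s(Y))<\infty$. Then $\mathrm P(XY>x)\sim\mathrm E(Y^\alpha s(Y))\overline F(x)$ as $x\to\infty$.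
   Context: For a random vector $(A,B)$, $A$ real-valued with distribution $F_A$, $\overline{F_A}>0$ everywhere, $B$ with values in $(0,\infty)$: $D_B=\{y>0:\mathrm P(B\in(y-\delta,y+\delta))>0\ \forall\delta>0\}$; for $y\in D_B$, $\mathrm P(A>x\mid B=y)=\lim_{t\downarrow0}\mathrm P(A>x,B\in[y,y+t))/\mathrm P(B\in[y,y+t))$ when the limit exists; $(A,B)$ is conditionally dependent with positive measurable function $s$ if these exist and $\lim_{x\to\infty}\sup_{y\in D_B}|\mathrm P(A>x\mid B=y)/(\overline{F_A}(x)s(y))-1|=0$. $U\in\mathscr L$ means $\overline U(x-t)/\overline U(x)\to1$ for each $t>0$. $F\in\mathscr R_{-\alpha}$ means $\overline F(xy)/\overline F(x)\to y^{-\alpha}$ for each $y>0$. *)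

theory Defs
  imports "HOL-Probability.Probability"
begin

definition ccdf :: "real measure \<Rightarrow> real \<Rightarrow> real" where
  "ccdf N x = measure N {x<..}"

definition rv_tail :: "'a measure \<Rightarrow> ('a \<Rightarrow> real) \<Rightarrow> real \<Rightarrow> real" where
  "rv_tail M A x = measure M {\<omega> \<in> space M. A \<omega> > x}"

text \<open>The set D_B of points of increase of B in (0,infinity).\<close>
definition supp_pts :: "'a measure \<Rightarrow> ('a \<Rightarrow> real) \<Rightarrow> real set" where
  "supp_pts M B = {y. y > 0 \<and> (\<forall>\<delta>>0. measure M {\<omega> \<in> space M. B \<omega> \<in> {y - \<delta><..<y + \<delta>}} > 0)}"

text \<open>P(A > x | B = y) exists and equals p: the limit of the ratio as t tends to 0 from
  the right, where the ratio is required to be well defined (positive denominator).\<close>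
definition has_cond_tail ::
  "'a measure \<Rightarrow> ('a \<Rightarrow> real) \<Rightarrow> ('a \<Rightarrow> real) \<Rightarrow> real \<Rightarrow> real \<Rightarrow> real \<Rightarrow> bool" where
  "has_cond_tail M A B x y p \<longleftrightarrow>
     (\<forall>\<^sub>F t in at_right 0. measure M {\<omega> \<in> space M. B \<omega> \<in> {y..<y + t}} > 0) \<and>
     ((\<lambda>t. measure M {\<omega> \<in> space M. A \<omega> > x \<and> B \<omega> \<in> {y..<y + t}}
            / measure M {\<omega> \<in> space M. B \<omega> \<in> {y..<y + t}}) \<longlongrightarrow> p) (at_right 0)"

definition cond_dependent ::
  "'a measure \<Rightarrow> ('a \<Rightarrow> real) \<Rightarrow> ('a \<Rightarrow> real) \<Rightarrow> (real \<Rightarrow> real) \<Rightarrow> bool" where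
  "cond_dependent M A B s \<longleftrightarrow>
     (\<forall>x. rv_tail M A x > 0) \<and>
     (\<forall>y>0. s y > 0) \<and> s \<in> borel_measurable (restrict_space borel {0<..}) \<and>
     (\<exists>c. (\<forall>x. \<forall>y\<in>supp_pts M B. has_cond_tail M A B x y (c x y)) \<and>
          (\<forall>e>0. \<forall>\<^sub>F x in at_top. \<forall>y\<in>supp_pts M B.
               \<bar>c x y / (rv_tail M A x * s y) - 1\<bar> \<le> e))"

definition long_tailed :: "real measure \<Rightarrow> bool" where
  "long_tailed N \<longleftrightarrow> (\<forall>t>0. ((\<lambda>x. ccdf N (x - t) / ccdf N x) \<longlongrightarrow> 1) at_top)"

definition reg_var :: "real \<Rightarrow> real measure \<Rightarrow> bool" where
  "reg_var \<alpha> N \<longleftrightarrow> (\<forall>y>0. ((\<lambda>x. ccdf N (x * y) / ccdf N x) \<longlongrightarrow> y powr (- \<alpha>)) at_top)"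

definition slowly_varying :: "(real \<Rightarrow> real) \<Rightarrow> bool" where
  "slowly_varying L \<longleftrightarrow> (\<forall>x>0. L x > 0) \<and>
     (\<forall>y>0. ((\<lambda>x. L (x * y) / L x) \<longlongrightarrow> 1) at_top)"

end

theory Submission
  imports Defs
begin

text \<open>
  For large \<open>t\<close>, conditional dependence makes \<open>B \<mapsto> P(\<xi> > t, \<eta> \<in> B)\<close> close to
  \<open>U t \<cdot> E[1\<^sub>B(\<eta>) s0(\<eta>)]\<close>, where \<open>U\<close> is the tail of \<open>\<xi>\<close>: the definition controls the ratio
  on shrinking intervals \<open>[y, y + h)\<close>, and a creeping argument (the infimum of the points where the
  comparison fails cannot exist) extends this to every interval \<open>[a, b) \<subseteq> (0, \<infinity>)\<close>. Exhausting
  \<open>(0, \<infinity>)\<close> gives \<open>E s0(\<eta>) = 1\<close>, hence \<open>s = s0\<close>; long-tailedness of \<open>U\<close> then gives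
  \<open>P(\<xi> - \<eta> > x) \<sim> U x\<close>, so \<open>U\<close> is regularly varying with index \<open>-\<alpha>\<close>.

  Splitting \<open>\<eta>\<close> into geometric cells \<open>[A q\<^sup>k, A q\<^sup>k\<^sup>+\<^sup>1)\<close> and using regular variation on each cell
  shows \<open>P(XY > x) \<approx> U x \<cdot> E[\<eta>\<^sup>\<alpha> s0(\<eta>); A \<le> \<eta> < A q\<^sup>N]\<close> up to factors tending to 1 as
  \<open>q \<down> 1\<close>. Small values of \<open>\<eta>\<close> carry little mass of \<open>s0(\<eta>)\<close>, and large values are
  negligible by a Potter bound for \<open>U\<close> in case (i), or by the bound on \<open>L\<close> in case (ii), combined
  with \<open>P(\<eta> > x) = o(P(\<xi> - \<eta> > x))\<close>.
\<close>

lemma le_by_creeping: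
  fixes f g :: "real \<Rightarrow> real \<Rightarrow> real" and a b :: real
  assumes "a \<le> b"
    and f_add: "\<And>u v w. a \<le> u \<Longrightarrow> u \<le> v \<Longrightarrow> v \<le> w \<Longrightarrow> f u w = f u v + f v w"
    and g_add: "\<And>u v w. a \<le> u \<Longrightarrow> u \<le> v \<Longrightarrow> v \<le> w \<Longrightarrow> g u w = g u v + g v w"
    and f_left: "\<And>w. a < w \<Longrightarrow> w \<le> b \<Longrightarrow> (\<lambda>n. f a (w - (w - a) / (real n + 1))) \<longlonglongrightarrow> f a w"
    and g_left: "\<And>w. a < w \<Longrightarrow> w \<le> b \<Longrightarrow> (\<lambda>n. g a (w - (w - a) / (real n + 1))) \<longlonglongrightarrow> g a w"
    and local: "\<And>y. a \<le> y \<Longrightarrow> y < b \<Longrightarrow> \<forall>\<^sub>F h in at_right 0. f y (y + h) \<le> g y (y + h)"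
  shows "f a b \<le> g a b"
proof (rule ccontr)
  define \<phi> where "\<phi> w = g a w - f a w" for w
  define T where "T = {w. a \<le> w \<and> w \<le> b \<and> \<phi> w < 0}"
  define w0 where "w0 = Inf T"
  assume "\<not> f a b \<le> g a b"
  then have "b \<in> T" using \<open>a \<le> b\<close> by (simp add: T_def \<phi>_def)
  have bdd: "bdd_below T" unfolding T_def by (rule bdd_belowI[of _ a]) auto
  have "a \<le> w0" "w0 \<le> b"
    unfolding w0_def using \<open>b \<in> T\<close> bdd by (auto intro!: cInf_greatest cInf_lower simp: T_def)
  have below: "\<phi> w \<ge> 0" if "a \<le> w" "w < w0" for w
    using that \<open>w0 \<le> b\<close> cInf_lower[OF _ bdd, of w] by (force simp: T_def w0_def)
  \<comment> \<open>\<open>\<phi>\<close> is nonnegative at the infimum \<open>w0\<close> by left continuity, so nonnegative on \<open>[w0, w0 + \<delta>)\<close>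
      by additivity and the local inequality, contradicting \<open>w0 = Inf T\<close>.\<close>
  have \<phi>_w0: "\<phi> w0 \<ge> 0"
  proof (cases "w0 = a")
    case True
    then show ?thesis using f_add[of a a a] g_add[of a a a] by (simp add: \<phi>_def)
  next
    case False
    with \<open>a \<le> w0\<close> have "a < w0" by simp
    have lim: "(\<lambda>n. \<phi> (w0 - (w0 - a) / (real n + 1))) \<longlonglongrightarrow> \<phi> w0"
      unfolding \<phi>_def using \<open>a < w0\<close> \<open>w0 \<le> b\<close> by (intro tendsto_diff f_left g_left)
    have "(w0 - a) / (real n + 1) > 0" "(w0 - a) / (real n + 1) \<le> w0 - a" for n
      using \<open>a < w0\<close> by (auto simp: divide_le_eq)
    then have "\<forall>n\<ge>0. 0 \<le> \<phi> (w0 - (w0 - a) / (real n + 1))"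
      by (intro allI impI below) (auto simp: algebra_simps)
    then show ?thesis by (intro LIMSEQ_le_const[OF lim]) blast
  qed
  with \<open>b \<in> T\<close> have "w0 < b" using \<open>w0 \<le> b\<close> by (cases "w0 = b") (auto simp: T_def)
  then obtain \<delta> where "\<delta> > 0" and \<delta>: "\<And>h. 0 < h \<Longrightarrow> h < \<delta> \<Longrightarrow> f w0 (w0 + h) \<le> g w0 (w0 + h)"
    using local[OF \<open>a \<le> w0\<close>] unfolding eventually_at_right_field by force
  have "w0 + \<delta> \<le> z" if "z \<in> T" for z
  proof (rule ccontr)
    assume "\<not> w0 + \<delta> \<le> z"
    moreover have "w0 \<le> z" unfolding w0_def using that bdd by (rule cInf_lower)
    moreover have "\<phi> z < 0" using that by (simp add: T_def)
    ultimately show False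
      using \<phi>_w0 \<delta>[of "z - w0"] f_add[of a w0 z] g_add[of a w0 z] \<open>a \<le> w0\<close>
      by (cases "z = w0") (auto simp: \<phi>_def)
  qed
  then have "w0 + \<delta> \<le> w0" unfolding w0_def using \<open>b \<in> T\<close> by (intro cInf_greatest) auto
  then show False using \<open>\<delta> > 0\<close> by simp
qed

lemma left_approx_atLeastLessThan:
  fixes a w :: real
  assumes "a < w"
  shows "incseq (\<lambda>n. {a..<w - (w - a) / (real n + 1)})"
    and "(\<Union>n. {a..<w - (w - a) / (real n + 1)}) = {a..<w}"
proof -
  have "(w - a) / (real (Suc n) + 1) \<le> (w - a) / (real n + 1)" for n
    using assms by (intro divide_left_mono) auto
  then show "incseq (\<lambda>n. {a..<w - (w - a) / (real n + 1)})"
    by (intro incseq_SucI subsetI) (auto intro: less_le_trans)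
  have "\<exists>n. (w - a) / (real n + 1) < w - y" if "y < w" for y
  proof -
    obtain n :: nat where "(w - a) / (w - y) < real n + 1"
      using reals_Archimedean2[of "(w - a) / (w - y)"] by (metis add.commute add_strict_increasing zero_less_one less_eq_real_def)
    then show ?thesis using that by (auto simp: divide_less_eq mult.commute)
  qed
  moreover have "(w - a) / (real n + 1) > 0" for n using assms by simp
  ultimately show "(\<Union>n. {a..<w - (w - a) / (real n + 1)}) = {a..<w}"
    by (auto simp: less_diff_eq add.commute) (smt (verit, best))
qed

definition exhaustion :: "nat \<Rightarrow> real set" where
  "exhaustion n = {1 / (real n + 1)..<real n + 1}"

lemma exhaustion_borel [measurable]: "exhaustion n \<in> sets borel"
  by (simp add: exhaustion_def)

lemma incseq_exhaustion: "incseq exhaustion"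
  by (intro incseq_SucI) (auto simp: exhaustion_def intro: order.trans[rotated] divide_left_mono)

lemma UN_exhaustion: "(\<Union>n. exhaustion n) = {0<..}"
proof (intro antisym subsetI)
  fix y :: real assume "y \<in> (\<Union>n. exhaustion n)"
  then show "y \<in> {0<..}" by (auto simp: exhaustion_def intro: less_le_trans[rotated])
next
  fix y :: real assume "y \<in> {0<..}"
  obtain n :: nat where n: "max y (1 / y) < real n" using reals_Archimedean2 by blast
  then have "1 / (real n + 1) \<le> y" using \<open>y \<in> {0<..}\<close> by (simp add: divide_le_eq field_simps)
  then show "y \<in> (\<Union>n. exhaustion n)" using n by (auto simp: exhaustion_def)
qed

lemma ex_right_neighbour_close:
  fixes f :: "real \<Rightarrow> real"
  assumes "(f \<longlongrightarrow> 1) (at_right 1)" "d > 0"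
  obtains q where "1 < q" "q < 2" "1 - d < f q" "f q < 1 + d"
proof -
  have "\<forall>\<^sub>F q in at_right 1. 1 - d < f q \<and> f q < 1 + d"
    using assms by (intro eventually_conj order_tendstoD) auto
  moreover have "\<forall>\<^sub>F q in at_right 1. q < (2::real)"
    by (auto simp: eventually_at_right_field intro!: exI[of _ 2])
  moreover note eventually_at_right_less[of "1::real"]
  ultimately have "\<forall>\<^sub>F q in at_right 1. (1 - d < f q \<and> f q < 1 + d) \<and> q < 2 \<and> 1 < q"
    by eventually_elim auto
  then show ?thesis
    using that eventually_happens'[of "at_right (1::real)"] by auto
qed

lemma ex_power_bracket:
  fixes y q :: real
  assumes "1 \<le> y" "1 < q"
  obtains j where "q ^ j \<le> y" "y < q ^ Suc j"
proof -
  obtain m where "y < q ^ m"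
    using real_arch_pow[OF \<open>1 < q\<close>] by blast
  then have "\<exists>j. q ^ j \<le> y \<and> y < q ^ Suc j"
  proof (induction m)
    case (Suc m)
    show ?case
    proof (cases "y < q ^ m")
      case True
      then show ?thesis using Suc.IH by blast
    next
      case False
      then show ?thesis using Suc.prems by (intro exI[of _ m]) auto
    qed
  qed (use \<open>1 \<le> y\<close> in simp)
  then show ?thesis
    using that by blast
qed

lemma halving_iterate:
  fixes f :: "real \<Rightarrow> real"
  assumes step: "\<And>t. t \<ge> x1 \<Longrightarrow> f (t / 2) \<le> c * f t" and "c \<ge> 0" "x1 > 0"
  shows "x1 \<le> x / 2 ^ j \<Longrightarrow> f (x / 2 ^ Suc j) \<le> c ^ Suc j * f x"
proof (induction j)
  case (Suc j)
  have "x / 2 ^ Suc j > 0"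
    using Suc.prems \<open>x1 > 0\<close> by linarith
  then have "x / 2 ^ Suc j \<le> x / 2 ^ j"
    by (simp add: zero_less_divide_iff divide_le_eq)
  then have IH: "f (x / 2 ^ Suc j) \<le> c ^ Suc j * f x"
    using Suc.IH Suc.prems by linarith
  have "f (x / 2 ^ Suc (Suc j)) \<le> c * f (x / 2 ^ Suc j)"
    using step[OF Suc.prems] by (simp add: mult.commute)
  also have "\<dots> \<le> c * (c ^ Suc j * f x)"
    using IH \<open>c \<ge> 0\<close> by (intro mult_left_mono)
  finally show ?case
    by (simp add: mult.assoc)
qed (use step in simp)

definition geom_cell :: "real \<Rightarrow> real \<Rightarrow> nat \<Rightarrow> real set" where
  "geom_cell A q k = {A * q ^ k..<A * q ^ Suc k}"

lemma geom_cell_pos: "A > 0 \<Longrightarrow> q > 1 \<Longrightarrow> y \<in> geom_cell A q k \<Longrightarrow> y > 0"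
  unfolding geom_cell_def by (auto intro: less_le_trans[of 0 "A * q ^ k"])

lemma UN_geom_cell:
  assumes "A > 0" "q > 1"
  shows "(\<Union>k<N. geom_cell A q k) = {A..<A * q ^ N}"
proof (induction N)
  case (Suc N)
  have "A \<le> A * q ^ N" "A * q ^ N \<le> A * q ^ Suc N" using assms by auto
  then show ?case using Suc by (auto simp: lessThan_Suc geom_cell_def)
qed simp

lemma sum_indicator_geom_cell:
  assumes "A > 0" "q > 1"
  shows "(\<Sum>k<N. indicator (geom_cell A q k) y) = (indicator {A..<A * q ^ N} y :: real)"
proof (induction N)
  case (Suc N)
  have "A \<le> A * q ^ N" "A * q ^ N \<le> A * q ^ Suc N" using assms by auto
  then show ?case using Suc by (auto simp: indicator_def geom_cell_def)
qed simp

lemma disjoint_family_geom_cell: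
  assumes "A > 0" "q > 1"
  shows "disjoint_family (geom_cell A q)"
proof -
  have "geom_cell A q i \<inter> geom_cell A q j = {}" if "i < j" for i j
  proof -
    have "A * q ^ Suc i \<le> A * q ^ j" using assms that by (intro mult_left_mono power_increasing) auto
    then show ?thesis by (auto simp: geom_cell_def)
  qed
  then show ?thesis
    unfolding disjoint_family_on_def by (metis Int_commute linorder_neqE_nat)
qed

lemma filterlim_mult_const_at_top: "c > 0 \<Longrightarrow> filterlim (\<lambda>x::real. x * c) at_top at_top"
  using filterlim_tendsto_pos_mult_at_top[OF tendsto_const[of c] _ filterlim_ident]
  by (simp add: mult.commute)

lemma filterlim_add_const_at_top: "filterlim (\<lambda>x::real. x + c) at_top at_top"
  using filterlim_tendsto_add_at_top[OF tendsto_const[of c] filterlim_ident]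
  by (simp add: add.commute)

lemma ccdf_distr:
  "f \<in> borel_measurable M \<Longrightarrow> ccdf (distr M borel f) x = measure M {\<omega> \<in> space M. f \<omega> > x}"
  unfolding ccdf_def by (subst measure_distr) (auto intro!: arg_cong[where f = "measure M"])

section \<open>The joint tail of \<open>(\<xi>, \<eta>)\<close> on intervals\<close>

locale cond_dep = prob_space M for M :: "'a measure" +
  fixes \<xi> \<eta> :: "'a \<Rightarrow> real" and s0 :: "real \<Rightarrow> real"
  assumes \<xi>_measurable [measurable]: "\<xi> \<in> borel_measurable M"
    and \<eta>_measurable [measurable]: "\<eta> \<in> borel_measurable M"
    and \<eta>_pos: "AE \<omega> in M. \<eta> \<omega> > 0"
    and s0_cont: "continuous_on {0<..} s0"
    and s0_pos: "\<And>y. y > 0 \<Longrightarrow> s0 y > 0"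
    and cond_dependence: "cond_dependent M \<xi> \<eta> s0"
    and s0_integrable: "integrable M (\<lambda>\<omega>. s0 (\<eta> \<omega>))"
begin

definition U :: "real \<Rightarrow> real" where
  "U t = measure M {\<omega> \<in> space M. \<xi> \<omega> > t}"

definition joint_tail :: "real \<Rightarrow> real set \<Rightarrow> real" where
  "joint_tail t B = measure M {\<omega> \<in> space M. \<xi> \<omega> > t \<and> \<eta> \<omega> \<in> B}"

definition eta_prob :: "real set \<Rightarrow> real" where
  "eta_prob B = measure M {\<omega> \<in> space M. \<eta> \<omega> \<in> B}"

definition eta_integral :: "(real \<Rightarrow> real) \<Rightarrow> real set \<Rightarrow> real" where
  "eta_integral h B = (\<integral>\<omega>. indicator B (\<eta> \<omega>) * h (\<eta> \<omega>) \<partial>M)"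

lemma rv_tail_eq_U: "rv_tail M \<xi> = U"
  by (simp add: fun_eq_iff rv_tail_def U_def)

lemma U_pos: "U t > 0"
  using cond_dependence by (simp add: cond_dependent_def rv_tail_eq_U)

lemma U_antimono: "t \<le> t' \<Longrightarrow> U t' \<le> U t"
  unfolding U_def by (intro finite_measure_mono) auto

lemma integrable_eta_indicator:
  fixes h :: "real \<Rightarrow> real"
  assumes h: "integrable M (\<lambda>\<omega>. h (\<eta> \<omega>))" and [measurable]: "B \<in> sets borel"
  shows "integrable M (\<lambda>\<omega>. indicator B (\<eta> \<omega>) * h (\<eta> \<omega>))"
proof -
  have "integrable M (\<lambda>\<omega>. h (\<eta> \<omega>) * indicator {\<omega> \<in> space M. \<eta> \<omega> \<in> B} \<omega>)"
    using h by (intro integrable_real_mult_indicator) measurable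
  then show ?thesis
    by (rule Bochner_Integration.integrable_cong[OF refl, THEN iffD1, rotated]) (simp add: indicator_def)
qed

lemma eta_integral_const:
  assumes [measurable]: "B \<in> sets borel"
  shows "eta_integral (\<lambda>_. c) B = c * eta_prob B"
proof -
  have "eta_integral (\<lambda>_. c) B = (\<integral>\<omega>. c * indicator {\<omega> \<in> space M. \<eta> \<omega> \<in> B} \<omega> \<partial>M)"
    unfolding eta_integral_def by (intro Bochner_Integration.integral_cong) (auto simp: indicator_def)
  also have "\<dots> = c * eta_prob B"
    by (simp add: eta_prob_def)
  finally show ?thesis .
qed

lemma eta_integral_cmult: "eta_integral (\<lambda>y. c * h y) B = c * eta_integral h B"
  unfolding eta_integral_def by (simp add: algebra_simps)

lemma eta_integral_UNIV: "eta_integral h UNIV = (\<integral>\<omega>. h (\<eta> \<omega>) \<partial>M)"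
  by (simp add: eta_integral_def)

lemma eta_integral_Un:
  assumes h: "integrable M (\<lambda>\<omega>. h (\<eta> \<omega>))"
    and "B1 \<inter> B2 = {}" "B1 \<in> sets borel" "B2 \<in> sets borel"
  shows "eta_integral h (B1 \<union> B2) = eta_integral h B1 + eta_integral h B2"
proof -
  have "eta_integral h (B1 \<union> B2)
      = (\<integral>\<omega>. indicator B1 (\<eta> \<omega>) * h (\<eta> \<omega>) + indicator B2 (\<eta> \<omega>) * h (\<eta> \<omega>) \<partial>M)"
    unfolding eta_integral_def using assms(2)
    by (intro Bochner_Integration.integral_cong) (auto simp: indicator_def)
  also have "\<dots> = eta_integral h B1 + eta_integral h B2"
    unfolding eta_integral_def
    by (intro Bochner_Integration.integral_add integrable_eta_indicator h assms(3,4))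
  finally show ?thesis .
qed

lemma eta_integral_split:
  assumes "integrable M (\<lambda>\<omega>. h (\<eta> \<omega>))" "a \<le> b" "b \<le> c"
  shows "eta_integral h {a..<c} = eta_integral h {a..<b} + eta_integral h {b..<c}"
  using eta_integral_Un[OF assms(1), of "{a..<b}" "{b..<c}"] assms(2,3) by (simp add: ivl_disj_un)

lemma eta_integral_incseq:
  assumes h: "integrable M (\<lambda>\<omega>. h (\<eta> \<omega>))" and "incseq B" and B: "\<And>n. B n \<in> sets borel"
  shows "(\<lambda>n. eta_integral h (B n)) \<longlonglongrightarrow> eta_integral h (\<Union>n. B n)"
  unfolding eta_integral_def
proof (rule integral_dominated_convergence[where w = "\<lambda>\<omega>. \<bar>h (\<eta> \<omega>)\<bar>"])
  show "(\<lambda>\<omega>. indicator (\<Union>n. B n) (\<eta> \<omega>) * h (\<eta> \<omega>)) \<in> borel_measurable M"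
    using B by (intro borel_measurable_integrable integrable_eta_indicator h) auto
  show "(\<lambda>\<omega>. indicator (B n) (\<eta> \<omega>) * h (\<eta> \<omega>)) \<in> borel_measurable M" for n
    by (intro borel_measurable_integrable integrable_eta_indicator h B)
  show "AE \<omega> in M. (\<lambda>n. indicator (B n) (\<eta> \<omega>) * h (\<eta> \<omega>))
      \<longlonglongrightarrow> indicator (\<Union>n. B n) (\<eta> \<omega>) * h (\<eta> \<omega>)"
    by (intro AE_I2 tendsto_mult tendsto_const LIMSEQ_indicator_incseq \<open>incseq B\<close>)
qed (use integrable_abs[OF h] borel_measurable_integrable[OF h] in \<open>auto simp: indicator_def\<close>)

lemma eta_integral_null:
  assumes [measurable]: "B \<in> sets borel" and "eta_prob B = 0"
  shows "eta_integral h B = 0"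
proof -
  have "{\<omega> \<in> space M. \<eta> \<omega> \<in> B} \<in> null_sets M"
    using assms(2) by (auto simp: null_sets_def emeasure_eq_measure eta_prob_def)
  then have "AE \<omega> in M. indicator B (\<eta> \<omega>) * h (\<eta> \<omega>) = 0"
    by (rule AE_I') (auto simp: indicator_def)
  then show ?thesis unfolding eta_integral_def by (rule integral_eq_zero_AE)
qed

lemma eta_integral_bounds:
  assumes h: "integrable M (\<lambda>\<omega>. h (\<eta> \<omega>))" and B: "B \<in> sets borel"
    and bnd: "\<And>z. z \<in> B \<Longrightarrow> lo \<le> h z \<and> h z \<le> hi"
  shows "lo * eta_prob B \<le> eta_integral h B" and "eta_integral h B \<le> hi * eta_prob B"
proof -
  have "integrable M (\<lambda>\<omega>. indicator B (\<eta> \<omega>) * c)" for c :: real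
    using integrable_eta_indicator[of "\<lambda>_. c", OF _ B] by simp
  then have "eta_integral (\<lambda>_. lo) B \<le> eta_integral h B" "eta_integral h B \<le> eta_integral (\<lambda>_. hi) B"
    unfolding eta_integral_def using bnd
    by (intro integral_mono integrable_eta_indicator h B; force simp: indicator_def)+
  then show "lo * eta_prob B \<le> eta_integral h B" "eta_integral h B \<le> hi * eta_prob B"
    by (simp_all add: eta_integral_const B)
qed

lemma eta_integral_mono_set:
  assumes h: "integrable M (\<lambda>\<omega>. h (\<eta> \<omega>))" and h_nonneg: "\<And>y. y > 0 \<Longrightarrow> h y \<ge> 0"
    and "B1 \<subseteq> B2" "B1 \<in> sets borel" "B2 \<in> sets borel"
  shows "eta_integral h B1 \<le> eta_integral h B2"
  unfolding eta_integral_def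
proof (rule integral_mono_AE)
  show "AE \<omega> in M. indicator B1 (\<eta> \<omega>) * h (\<eta> \<omega>) \<le> indicator B2 (\<eta> \<omega>) * h (\<eta> \<omega>)"
    using \<eta>_pos by eventually_elim (use h_nonneg \<open>B1 \<subseteq> B2\<close> in \<open>auto simp: indicator_def\<close>)
qed (intro integrable_eta_indicator h assms)+

lemma eta_integral_nonneg:
  assumes "integrable M (\<lambda>\<omega>. h (\<eta> \<omega>))" "\<And>y. y > 0 \<Longrightarrow> h y \<ge> 0" "B \<in> sets borel"
  shows "eta_integral h B \<ge> 0"
  using eta_integral_mono_set[OF assms(1,2), of "{}" B] assms(3) by (simp add: eta_integral_def)

lemma eta_integral_exhaustion:
  assumes h: "integrable M (\<lambda>\<omega>. h (\<eta> \<omega>))"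
  shows "(\<lambda>n. eta_integral h (exhaustion n)) \<longlonglongrightarrow> (\<integral>\<omega>. h (\<eta> \<omega>) \<partial>M)"
proof -
  have "eta_integral h {0<..} = (\<integral>\<omega>. h (\<eta> \<omega>) \<partial>M)"
    unfolding eta_integral_def
  proof (rule integral_cong_AE)
    show "AE \<omega> in M. indicator {0<..} (\<eta> \<omega>) * h (\<eta> \<omega>) = h (\<eta> \<omega>)"
      using \<eta>_pos by eventually_elim simp
  qed (use integrable_eta_indicator[OF h] borel_measurable_integrable[OF h] in auto)
  then show ?thesis
    using eta_integral_incseq[OF h incseq_exhaustion exhaustion_borel] by (simp add: UN_exhaustion)
qed

lemma joint_tail_split:
  assumes "a \<le> b" "b \<le> c"
  shows "joint_tail t {a..<c} = joint_tail t {a..<b} + joint_tail t {b..<c}"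
proof -
  have "{\<omega> \<in> space M. \<xi> \<omega> > t \<and> \<eta> \<omega> \<in> {a..<c}}
      = {\<omega> \<in> space M. \<xi> \<omega> > t \<and> \<eta> \<omega> \<in> {a..<b}} \<union> {\<omega> \<in> space M. \<xi> \<omega> > t \<and> \<eta> \<omega> \<in> {b..<c}}"
    using assms by auto
  then show ?thesis
    unfolding joint_tail_def by (subst finite_measure_Union[symmetric]) auto
qed

lemma joint_tail_incseq:
  assumes "incseq B" and [measurable]: "\<And>n. B n \<in> sets borel"
  shows "(\<lambda>n. joint_tail t (B n)) \<longlonglongrightarrow> joint_tail t (\<Union>n. B n)"
proof -
  have "(\<Union>n. {\<omega> \<in> space M. \<xi> \<omega> > t \<and> \<eta> \<omega> \<in> B n}) = {\<omega> \<in> space M. \<xi> \<omega> > t \<and> \<eta> \<omega> \<in> (\<Union>n. B n)}"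
    by auto
  moreover have "(\<lambda>n. measure M {\<omega> \<in> space M. \<xi> \<omega> > t \<and> \<eta> \<omega> \<in> B n})
      \<longlonglongrightarrow> measure M (\<Union>n. {\<omega> \<in> space M. \<xi> \<omega> > t \<and> \<eta> \<omega> \<in> B n})"
    using \<open>incseq B\<close> by (intro finite_Lim_measure_incseq) (auto simp: incseq_def)
  ultimately show ?thesis by (simp add: joint_tail_def)
qed

lemma joint_tail_le_eta_prob: "B \<in> sets borel \<Longrightarrow> joint_tail t B \<le> eta_prob B"
  unfolding joint_tail_def eta_prob_def by (intro finite_measure_mono) auto

lemma joint_tail_zero: "B \<in> sets borel \<Longrightarrow> eta_prob B = 0 \<Longrightarrow> joint_tail t B = 0"
  using joint_tail_le_eta_prob[of B t] by (simp add: joint_tail_def measure_le_0_iff)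

lemma joint_tail_exhaustion: "(\<lambda>n. joint_tail t (exhaustion n)) \<longlonglongrightarrow> U t"
proof -
  have "joint_tail t {0<..} = U t"
    unfolding joint_tail_def U_def
    by (rule finite_measure_eq_AE) (use \<eta>_pos in \<open>auto elim: eventually_mono\<close>)
  then show ?thesis
    using joint_tail_incseq[OF incseq_exhaustion exhaustion_borel, of t] by (simp add: UN_exhaustion)
qed

lemma eta_average_tendsto:
  assumes f: "integrable M (\<lambda>\<omega>. f (\<eta> \<omega>))" and "isCont f y"
    and pos: "\<forall>\<^sub>F h in at_right 0. eta_prob {y..<y + h} > 0"
  shows "((\<lambda>h. eta_integral f {y..<y + h} / eta_prob {y..<y + h}) \<longlongrightarrow> f y) (at_right 0)"
proof (rule tendstoI)
  fix \<epsilon> :: real assume "\<epsilon> > 0"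
  then obtain d where "d > 0" and d: "\<And>z. dist z y < d \<Longrightarrow> dist (f z) (f y) < \<epsilon> / 2"
    using \<open>isCont f y\<close> unfolding continuous_at_eps_delta by (meson half_gt_zero)
  have "\<forall>\<^sub>F h in at_right 0. h < d"
    using \<open>d > 0\<close> by (auto simp: eventually_at_right_field)
  with pos show "\<forall>\<^sub>F h in at_right 0.
      dist (eta_integral f {y..<y + h} / eta_prob {y..<y + h}) (f y) < \<epsilon>"
  proof eventually_elim
    case (elim h)
    have "f y - \<epsilon> / 2 \<le> f z \<and> f z \<le> f y + \<epsilon> / 2" if "z \<in> {y..<y + h}" for z
      using d[of z, unfolded dist_real_def abs_less_iff] that elim by auto
    then have "(f y - \<epsilon> / 2) * eta_prob {y..<y + h} \<le> eta_integral f {y..<y + h}"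
      "eta_integral f {y..<y + h} \<le> (f y + \<epsilon> / 2) * eta_prob {y..<y + h}"
      using eta_integral_bounds[OF f, of "{y..<y + h}" "f y - \<epsilon> / 2" "f y + \<epsilon> / 2"] by auto
    then have "f y - \<epsilon> / 2 \<le> eta_integral f {y..<y + h} / eta_prob {y..<y + h}"
      "eta_integral f {y..<y + h} / eta_prob {y..<y + h} \<le> f y + \<epsilon> / 2"
      using elim by (simp_all add: le_divide_eq divide_le_eq)
    then show ?case
      using \<open>\<epsilon> > 0\<close> by (simp add: dist_real_def abs_less_iff)
  qed
qed

lemma eventually_eta_prob_zero_outside_support:
  assumes "y > 0" "y \<notin> supp_pts M \<eta>"
  shows "\<forall>\<^sub>F h in at_right 0. eta_prob {y..<y + h} = 0"
proof -
  obtain \<delta> where "\<delta> > 0" and \<delta>: "eta_prob {y - \<delta><..<y + \<delta>} \<le> 0"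
    using assms by (auto simp: supp_pts_def eta_prob_def not_less)
  have "eta_prob {y..<y + h} = 0" if "0 < h" "h < \<delta>" for h
  proof -
    have "eta_prob {y..<y + h} \<le> eta_prob {y - \<delta><..<y + \<delta>}"
      unfolding eta_prob_def using that \<open>\<delta> > 0\<close> by (intro finite_measure_mono) auto
    with \<delta> show ?thesis by (simp add: eta_prob_def measure_le_0_iff)
  qed
  then show ?thesis
    unfolding eventually_at_right_field using \<open>\<delta> > 0\<close> by blast
qed

text \<open>On the support of \<open>\<eta>\<close>, \<open>P(\<xi> > t, \<eta> \<in> [y, y + h)) / P(\<eta> \<in> [y, y + h))\<close> tends to the
  conditional tail while the average of \<open>s0\<close> over \<open>[y, y + h)\<close> tends to \<open>s0 y\<close>.\<close>
lemma joint_tail_local_approx: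
  assumes "y > 0" and "e > 0"
    and cond: "y \<in> supp_pts M \<eta> \<Longrightarrow> has_cond_tail M \<xi> \<eta> t y c \<and> \<bar>c / (U t * s0 y) - 1\<bar> < e"
  shows "\<forall>\<^sub>F h in at_right 0.
           joint_tail t {y..<y + h} \<le> (1 + e) * U t * eta_integral s0 {y..<y + h} \<and>
           (1 - e) * U t * eta_integral s0 {y..<y + h} \<le> joint_tail t {y..<y + h}"
proof (cases "y \<in> supp_pts M \<eta>")
  case False
  with \<open>y > 0\<close> show ?thesis
    by (rule eventually_mono[OF eventually_eta_prob_zero_outside_support]) (simp add: joint_tail_zero eta_integral_null)
next
  case True
  define R where "R = (\<lambda>h. joint_tail t {y..<y + h} / eta_prob {y..<y + h})"
  define S where "S = (\<lambda>h. eta_integral s0 {y..<y + h} / eta_prob {y..<y + h})"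
  have pos: "\<forall>\<^sub>F h in at_right 0. eta_prob {y..<y + h} > 0"
    and R: "(R \<longlongrightarrow> c) (at_right 0)" and c: "\<bar>c / (U t * s0 y) - 1\<bar> < e"
    using cond[OF True] by (simp_all add: has_cond_tail_def R_def joint_tail_def eta_prob_def)
  have "isCont s0 y"
    using s0_cont \<open>y > 0\<close> by (simp add: continuous_on_eq_continuous_at)
  then have S: "(S \<longlongrightarrow> s0 y) (at_right 0)"
    unfolding S_def by (rule eta_average_tendsto[OF s0_integrable _ pos])
  have "U t > 0" "s0 y > 0"
    using U_pos s0_pos \<open>y > 0\<close> by auto
  then have "((\<lambda>h. R h / (U t * S h)) \<longlongrightarrow> c / (U t * s0 y)) (at_right 0)"
    by (intro tendsto_intros R S) simp
  with c have "\<forall>\<^sub>F h in at_right 0. R h / (U t * S h) < 1 + e"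
    and "\<forall>\<^sub>F h in at_right 0. R h / (U t * S h) > 1 - e"
    by (auto intro: order_tendstoD)
  moreover have "\<forall>\<^sub>F h in at_right 0. S h > 0"
    using order_tendstoD(1)[OF S, of 0] s0_pos \<open>y > 0\<close> by simp
  ultimately show ?thesis
    using pos
  proof eventually_elim
    case (elim h)
    define m where "m = eta_prob {y..<y + h}"
    have "R h < (1 + e) * (U t * S h)" "(1 - e) * (U t * S h) < R h"
      using elim U_pos[of t] by (simp_all add: divide_less_eq less_divide_eq)
    then have "R h * m \<le> (1 + e) * (U t * S h) * m" "(1 - e) * (U t * S h) * m \<le> R h * m"
      using elim(4) by (auto intro!: mult_right_mono simp: m_def)
    moreover have "R h * m = joint_tail t {y..<y + h}" "S h * m = eta_integral s0 {y..<y + h}"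
      using elim(4) by (simp_all add: R_def S_def m_def)
    ultimately show ?case
      by (simp add: mult.assoc)
  qed
qed

lemma joint_tail_interval_approx:
  assumes "e > 0" "0 < a" "a \<le> b"
    and cond: "\<And>y. y \<in> supp_pts M \<eta> \<Longrightarrow> has_cond_tail M \<xi> \<eta> t y (c y) \<and> \<bar>c y / (U t * s0 y) - 1\<bar> < e"
  shows "joint_tail t {a..<b} \<le> (1 + e) * U t * eta_integral s0 {a..<b}"
    and "(1 - e) * U t * eta_integral s0 {a..<b} \<le> joint_tail t {a..<b}"
proof -
  have local: "\<forall>\<^sub>F h in at_right 0.
         joint_tail t {y..<y + h} \<le> (1 + e) * U t * eta_integral s0 {y..<y + h} \<and>
         (1 - e) * U t * eta_integral s0 {y..<y + h} \<le> joint_tail t {y..<y + h}" if "a \<le> y" for y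
    using \<open>0 < a\<close> that \<open>e > 0\<close> cond by (intro joint_tail_local_approx[where c = "c y"]) auto
  have split: "k * eta_integral s0 {u..<w} = k * eta_integral s0 {u..<v} + k * eta_integral s0 {v..<w}"
    if "u \<le> v" "v \<le> w" for k u v w
    using eta_integral_split[OF s0_integrable that] by (simp add: algebra_simps)
  have left_cont: "(\<lambda>n. joint_tail t {a..<w - (w - a) / (real n + 1)}) \<longlonglongrightarrow> joint_tail t {a..<w}"
    "(\<lambda>n. k * eta_integral s0 {a..<w - (w - a) / (real n + 1)}) \<longlonglongrightarrow> k * eta_integral s0 {a..<w}"
    if "a < w" for k w
    using joint_tail_incseq[OF left_approx_atLeastLessThan(1)[OF that], of t]
      eta_integral_incseq[OF s0_integrable left_approx_atLeastLessThan(1)[OF that]]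
    by (auto simp: left_approx_atLeastLessThan(2)[OF that] intro: tendsto_mult_left)
  show "joint_tail t {a..<b} \<le> (1 + e) * U t * eta_integral s0 {a..<b}"
  proof (rule le_by_creeping[where f = "\<lambda>u w. joint_tail t {u..<w}"
        and g = "\<lambda>u w. (1 + e) * U t * eta_integral s0 {u..<w}"])
    show "\<forall>\<^sub>F h in at_right 0. joint_tail t {y..<y + h} \<le> (1 + e) * U t * eta_integral s0 {y..<y + h}"
      if "a \<le> y" for y
      using local[OF that] by eventually_elim simp
  qed (use \<open>a \<le> b\<close> in \<open>auto intro: joint_tail_split split left_cont\<close>)
  show "(1 - e) * U t * eta_integral s0 {a..<b} \<le> joint_tail t {a..<b}"
  proof (rule le_by_creeping[where g = "\<lambda>u w. joint_tail t {u..<w}"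
        and f = "\<lambda>u w. (1 - e) * U t * eta_integral s0 {u..<w}"])
    show "\<forall>\<^sub>F h in at_right 0. (1 - e) * U t * eta_integral s0 {y..<y + h} \<le> joint_tail t {y..<y + h}"
      if "a \<le> y" for y
      using local[OF that] by eventually_elim simp
  qed (use \<open>a \<le> b\<close> in \<open>auto intro: joint_tail_split split left_cont\<close>)
qed

lemma joint_tail_approx:
  assumes "e > 0"
  shows "\<forall>\<^sub>F t in at_top. \<forall>a b. 0 < a \<longrightarrow> a \<le> b \<longrightarrow>
           joint_tail t {a..<b} \<le> (1 + e) * U t * eta_integral s0 {a..<b} \<and>
           (1 - e) * U t * eta_integral s0 {a..<b} \<le> joint_tail t {a..<b}"
proof -
  obtain c where c_tail: "\<And>x y. y \<in> supp_pts M \<eta> \<Longrightarrow> has_cond_tail M \<xi> \<eta> x y (c x y)"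
    and c_ratio: "\<And>e. e > 0 \<Longrightarrow>
      \<forall>\<^sub>F x in at_top. \<forall>y\<in>supp_pts M \<eta>. \<bar>c x y / (U x * s0 y) - 1\<bar> \<le> e"
    using cond_dependence unfolding cond_dependent_def rv_tail_eq_U by blast
  have "\<forall>\<^sub>F t in at_top. \<forall>y\<in>supp_pts M \<eta>. \<bar>c t y / (U t * s0 y) - 1\<bar> \<le> e / 2"
    using c_ratio[of "e / 2"] \<open>e > 0\<close> by simp
  then show ?thesis
  proof eventually_elim
    case (elim t)
    then have "has_cond_tail M \<xi> \<eta> t y (c t y) \<and> \<bar>c t y / (U t * s0 y) - 1\<bar> < e"
      if "y \<in> supp_pts M \<eta>" for y
      using c_tail[OF that] \<open>e > 0\<close> that by fastforce
    then show ?case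
      using joint_tail_interval_approx[OF \<open>e > 0\<close>, of _ _ t "c t"] by blast
  qed
qed

lemma expectation_s0_eq_1: "(\<integral>\<omega>. s0 (\<eta> \<omega>) \<partial>M) = 1"
proof -
  define Z where "Z = (\<integral>\<omega>. s0 (\<eta> \<omega>) \<partial>M)"
  have bounds: "(1 - e) * Z \<le> 1 \<and> 1 \<le> (1 + e) * Z" if "e > 0" for e
  proof -
    note approx = joint_tail_approx[OF \<open>e > 0\<close>]
    obtain t where t: "\<And>a b. 0 < a \<Longrightarrow> a \<le> b \<Longrightarrow>
        joint_tail t {a..<b} \<le> (1 + e) * U t * eta_integral s0 {a..<b} \<and>
        (1 - e) * U t * eta_integral s0 {a..<b} \<le> joint_tail t {a..<b}"
      using eventually_happens'[OF _ approx] by auto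
    have "1 / (real n + 1) \<le> 1" "1 \<le> real n + 1" for n
      by simp_all
    then have "1 / (real n + 1) \<le> real n + 1" for n
      by (rule order.trans)
    then have n: "joint_tail t (exhaustion n) \<le> (1 + e) * U t * eta_integral s0 (exhaustion n) \<and>
        (1 - e) * U t * eta_integral s0 (exhaustion n) \<le> joint_tail t (exhaustion n)" for n
      unfolding exhaustion_def by (intro t) auto
    have Z: "(\<lambda>n. k * eta_integral s0 (exhaustion n)) \<longlonglongrightarrow> k * Z" for k
      unfolding Z_def by (intro tendsto_mult_left eta_integral_exhaustion s0_integrable)
    have "U t \<le> (1 + e) * U t * Z"
      by (rule LIMSEQ_le[OF joint_tail_exhaustion Z]) (use n in auto)
    moreover have "(1 - e) * U t * Z \<le> U t"
      by (rule LIMSEQ_le[OF Z joint_tail_exhaustion]) (use n in auto)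
    ultimately show ?thesis
      using U_pos[of t] by (simp add: mult.commute mult.left_commute)
  qed
  then have "Z > 0"
    using bounds[of 1] by simp
  have "Z \<le> 1 + e" "1 \<le> Z + e" if "e > 0" for e
    using bounds[of "e / Z"] that \<open>Z > 0\<close> by (simp_all add: algebra_simps)
  then have "Z \<le> 1" "1 \<le> Z"
    by (auto intro: field_le_epsilon)
  then show ?thesis by (simp add: Z_def)
qed

end

section \<open>Regular variation and geometric grids\<close>

locale cond_dep_rv = cond_dep M \<xi> \<eta> s0 for M :: "'a measure" and \<xi> \<eta> s0 +
  fixes \<alpha> :: real
  assumes long_tailed_\<xi>: "long_tailed (distr M borel \<xi>)"
    and \<alpha>_nonneg: "\<alpha> \<ge> 0"
    and reg_var_diff: "reg_var \<alpha> (distr M borel (\<lambda>\<omega>. \<xi> \<omega> - \<eta> \<omega>))"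
begin

definition F_tail :: "real \<Rightarrow> real" where
  "F_tail x = measure M {\<omega> \<in> space M. \<xi> \<omega> - \<eta> \<omega> > x}"

definition G_tail :: "real \<Rightarrow> real" where
  "G_tail x = measure M {\<omega> \<in> space M. \<eta> \<omega> > x}"

lemma ccdf_\<xi>: "ccdf (distr M borel \<xi>) = U"
  by (simp add: fun_eq_iff ccdf_distr U_def)

lemma ccdf_diff: "ccdf (distr M borel (\<lambda>\<omega>. \<xi> \<omega> - \<eta> \<omega>)) = F_tail"
  by (simp add: fun_eq_iff ccdf_distr F_tail_def)

lemma ccdf_\<eta>: "ccdf (distr M borel \<eta>) = G_tail"
  by (simp add: fun_eq_iff ccdf_distr G_tail_def)

lemma U_shift_ratio:
  assumes "c \<ge> 0"
  shows "((\<lambda>x. U (x + c) / U x) \<longlongrightarrow> 1) at_top"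
proof (cases "c = 0")
  case True
  then show ?thesis using U_pos by (simp add: less_imp_neq[symmetric])
next
  case False
  then have "((\<lambda>x. U (x - c) / U x) \<longlongrightarrow> 1) at_top"
    using long_tailed_\<xi> assms unfolding long_tailed_def ccdf_\<xi> by simp
  from filterlim_compose[OF this filterlim_add_const_at_top[of c]]
  have "((\<lambda>x. U x / U (x + c)) \<longlongrightarrow> 1) at_top" by simp
  from tendsto_inverse[OF this] show ?thesis by simp
qed

lemma F_tail_le_U: "F_tail x \<le> U x"
  unfolding F_tail_def U_def
  by (rule finite_measure_mono_AE) (use \<eta>_pos in \<open>auto elim: eventually_mono\<close>)

text \<open>Long-tailedness lets the shift by \<open>\<eta>\<close> be absorbed: on \<open>\<eta> \<in> [A, B)\<close>, which carries
  almost all of the mass of \<open>s0(\<eta>)\<close>, \<open>\<xi> > x + B\<close> forces \<open>\<xi> - \<eta> > x\<close>.\<close>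
lemma F_tail_lower:
  assumes "0 < e" "e < 1"
  shows "\<forall>\<^sub>F x in at_top. (1 - e) ^ 3 * U x \<le> F_tail x"
proof -
  have "eventually (\<lambda>n. eta_integral s0 (exhaustion n) > 1 - e) sequentially"
    using eta_integral_exhaustion[OF s0_integrable] \<open>e > 0\<close>
    by (intro order_tendstoD(1)) (auto simp: expectation_s0_eq_1)
  then obtain n where n: "eta_integral s0 (exhaustion n) > 1 - e"
    by (auto simp: eventually_sequentially)
  define A B where "A = 1 / (real n + 1)" and "B = real n + 1"
  have "0 < A" "A \<le> 1" "1 \<le> B"
    unfolding A_def B_def by simp_all
  then have "A \<le> B" "B \<ge> 0"
    by linarith+
  have "\<forall>\<^sub>F x in at_top. (1 - e) * U x < U (x + B)"
    using order_tendstoD(1)[OF U_shift_ratio[OF \<open>B \<ge> 0\<close>], of "1 - e"] \<open>e > 0\<close> U_pos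
    by (auto elim!: eventually_mono simp: less_divide_eq)
  moreover have "\<forall>\<^sub>F x in at_top.
      (1 - e) * U (x + B) * eta_integral s0 {A..<B} \<le> joint_tail (x + B) {A..<B}"
    using filterlim_iff[THEN iffD1, OF filterlim_add_const_at_top, rule_format,
        OF joint_tail_approx[OF \<open>e > 0\<close>]]
    by eventually_elim (use \<open>0 < A\<close> \<open>A \<le> B\<close> in blast)
  ultimately show ?thesis
  proof eventually_elim
    case (elim x)
    have "joint_tail (x + B) {A..<B} \<le> F_tail x"
      unfolding joint_tail_def F_tail_def by (intro finite_measure_mono) auto
    moreover have "(1 - e) * ((1 - e) * U x) * (1 - e) \<le> (1 - e) * U (x + B) * eta_integral s0 {A..<B}"
      using elim(1) n \<open>e < 1\<close> U_pos[of x] U_pos[of "x + B"]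
      by (intro mult_mono mult_left_mono) (auto simp: A_def B_def exhaustion_def)
    ultimately show ?case
      using elim(2) by (simp add: power3_eq_cube mult_ac)
  qed
qed

lemma F_tail_U_ratio: "((\<lambda>x. F_tail x / U x) \<longlongrightarrow> 1) at_top"
proof (rule order_tendstoI)
  fix a :: real assume "a > 1"
  have "U x < a * U x" for x
    using U_pos[of x] \<open>a > 1\<close> by simp
  then have "F_tail x < a * U x" for x
    by (rule order.strict_trans1[OF F_tail_le_U])
  then have "F_tail x / U x < a" for x
    using U_pos[of x] by (simp add: divide_less_eq)
  then show "\<forall>\<^sub>F x in at_top. F_tail x / U x < a" by simp
next
  fix a :: real assume "a < 1"
  define e where "e = min ((1 - a) / 4) (1 / 2)"
  have "0 < e" "e < 1" "a < 1 - 3 * e"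
    using \<open>a < 1\<close> by (auto simp: e_def min_def field_simps)
  moreover have "1 - 3 * e \<le> (1 - e) ^ 3"
    using Bernoulli_inequality[of "- e" 3] \<open>e < 1\<close> by simp
  ultimately have below: "a * U x < (1 - e) ^ 3 * U x" for x
    using U_pos[of x] by (intro mult_strict_right_mono) auto
  show "\<forall>\<^sub>F x in at_top. a < F_tail x / U x"
    using F_tail_lower[OF \<open>0 < e\<close> \<open>e < 1\<close>]
  proof eventually_elim
    case (elim x)
    then have "a * U x < F_tail x"
      using below[of x] by linarith
    then show ?case
      using U_pos[of x] by (simp add: less_divide_eq)
  qed
qed

lemma eventually_F_tail_pos: "\<forall>\<^sub>F x in at_top. F_tail x > 0"
  using order_tendstoD(1)[OF F_tail_U_ratio zero_less_one]
proof eventually_elim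
  case (elim x)
  then show ?case using U_pos[of x] by (simp add: zero_less_divide_iff)
qed

lemma U_reg_var:
  assumes "y > 0"
  shows "((\<lambda>x. U (x * y) / U x) \<longlongrightarrow> y powr (- \<alpha>)) at_top"
proof -
  have F: "((\<lambda>x. F_tail (x * y) / F_tail x) \<longlongrightarrow> y powr (- \<alpha>)) at_top"
    using reg_var_diff assms unfolding reg_var_def ccdf_diff by blast
  have FU_y: "((\<lambda>x. F_tail (x * y) / U (x * y)) \<longlongrightarrow> 1) at_top"
    using filterlim_compose[OF F_tail_U_ratio filterlim_mult_const_at_top[OF assms]] by simp
  have lim: "((\<lambda>x. inverse (F_tail (x * y) / U (x * y)) * (F_tail (x * y) / F_tail x) * (F_tail x / U x))
      \<longlongrightarrow> inverse 1 * y powr (- \<alpha>) * 1) at_top"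
    by (intro tendsto_mult tendsto_inverse FU_y F F_tail_U_ratio) auto
  have "\<forall>\<^sub>F x in at_top. F_tail (x * y) > 0 \<and> F_tail x > 0"
    by (rule eventually_conj[OF filterlim_iff[THEN iffD1, OF filterlim_mult_const_at_top[OF assms],
          rule_format, OF eventually_F_tail_pos] eventually_F_tail_pos])
  then have "\<forall>\<^sub>F x in at_top. inverse (F_tail (x * y) / U (x * y)) * (F_tail (x * y) / F_tail x)
      * (F_tail x / U x) = U (x * y) / U x"
    by eventually_elim (use U_pos in \<open>auto simp: field_simps\<close>)
  from tendsto_cong[OF this, THEN iffD1, OF lim] show ?thesis
    by simp
qed

lemma U_div_upper:
  assumes "y > 0" "e > 0"
  shows "\<forall>\<^sub>F x in at_top. U (x / y) \<le> (1 + e) * y powr \<alpha> * U x"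
proof -
  have "((\<lambda>x. U (x / y) / U x) \<longlongrightarrow> y powr \<alpha>) at_top"
    using U_reg_var[of "1 / y"] assms by (simp add: powr_minus_divide powr_divide)
  moreover have "y powr \<alpha> < (1 + e) * y powr \<alpha>"
    using assms by simp
  ultimately show ?thesis
    by (rule order_tendstoD(2)[THEN eventually_mono])
      (use U_pos in \<open>auto simp: divide_less_eq less_imp_le\<close>)
qed

lemma U_mult_lower:
  assumes "y > 0" "e > 0"
  shows "\<forall>\<^sub>F x in at_top. (1 - e) * y powr (- \<alpha>) * U x \<le> U (x * y)"
proof -
  have "(1 - e) * y powr (- \<alpha>) < y powr (- \<alpha>)"
    using assms by simp
  with U_reg_var[OF \<open>y > 0\<close>] show ?thesis
    by (rule order_tendstoD(1)[THEN eventually_mono])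
      (use U_pos in \<open>auto simp: less_divide_eq less_imp_le\<close>)
qed

definition product_tail :: "real \<Rightarrow> real" where
  "product_tail x = measure M {\<omega> \<in> space M. (\<xi> \<omega> - \<eta> \<omega>) * \<eta> \<omega> > x}"

definition s0_pow :: "real \<Rightarrow> real \<Rightarrow> real" where
  "s0_pow \<beta> y = y powr \<beta> * s0 y"

lemma s0_pow_nonneg: "y > 0 \<Longrightarrow> s0_pow \<beta> y \<ge> 0"
  unfolding s0_pow_def using s0_pos[of y] by simp

lemma eta_integral_geom_cells:
  assumes h: "integrable M (\<lambda>\<omega>. h (\<eta> \<omega>))" and "A > 0" "q > 1"
  shows "(\<Sum>k<N. eta_integral h (geom_cell A q k)) = eta_integral h {A..<A * q ^ N}"
proof -
  have "(\<Sum>k<N. eta_integral h (geom_cell A q k))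
      = (\<integral>\<omega>. (\<Sum>k<N. indicator (geom_cell A q k) (\<eta> \<omega>)) * h (\<eta> \<omega>) \<partial>M)"
    unfolding eta_integral_def sum_distrib_right
    by (rule Bochner_Integration.integral_sum[symmetric])
      (intro integrable_eta_indicator h, simp add: geom_cell_def)
  then show ?thesis
    by (simp add: eta_integral_def sum_indicator_geom_cell[OF assms(2,3)])
qed

lemma eta_integral_s0_pow_geom_cell:
  assumes V: "integrable M (\<lambda>\<omega>. s0_pow \<beta> (\<eta> \<omega>))" and "\<beta> \<ge> 0" "A > 0" "q > 1"
  shows "(A * q ^ k) powr \<beta> * eta_integral s0 (geom_cell A q k) \<le> eta_integral (s0_pow \<beta>) (geom_cell A q k)"
    and "eta_integral (s0_pow \<beta>) (geom_cell A q k) \<le> (A * q ^ Suc k) powr \<beta> * eta_integral s0 (geom_cell A q k)"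
proof -
  have cell: "geom_cell A q k \<in> sets borel"
    by (simp add: geom_cell_def)
  have int_c: "integrable M (\<lambda>\<omega>. indicator (geom_cell A q k) (\<eta> \<omega>) * (c * s0 (\<eta> \<omega>)))" for c
    using integrable_eta_indicator[of "\<lambda>y. c * s0 y", OF _ cell] s0_integrable by simp
  have bounds: "(A * q ^ k) powr \<beta> * s0 y \<le> s0_pow \<beta> y \<and> s0_pow \<beta> y \<le> (A * q ^ Suc k) powr \<beta> * s0 y"
    if "y \<in> geom_cell A q k" for y
  proof -
    have "y > 0" using geom_cell_pos[OF assms(3,4) that] .
    then show ?thesis
      using that assms(2,3,4) s0_pos[of y]
      by (auto simp: s0_pow_def geom_cell_def intro!: mult_right_mono powr_mono2)
  qed
  have "eta_integral (\<lambda>y. (A * q ^ k) powr \<beta> * s0 y) (geom_cell A q k) \<le> eta_integral (s0_pow \<beta>) (geom_cell A q k)"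
    "eta_integral (s0_pow \<beta>) (geom_cell A q k) \<le> eta_integral (\<lambda>y. (A * q ^ Suc k) powr \<beta> * s0 y) (geom_cell A q k)"
    unfolding eta_integral_def using bounds
    by (intro integral_mono int_c integrable_eta_indicator[OF V cell]; force simp: indicator_def)+
  then show "(A * q ^ k) powr \<beta> * eta_integral s0 (geom_cell A q k) \<le> eta_integral (s0_pow \<beta>) (geom_cell A q k)"
    "eta_integral (s0_pow \<beta>) (geom_cell A q k) \<le> (A * q ^ Suc k) powr \<beta> * eta_integral s0 (geom_cell A q k)"
    by (simp_all add: eta_integral_cmult)
qed

text \<open>On the cell \<open>\<eta> \<in> [A q\<^sup>k, A q\<^sup>k\<^sup>+\<^sup>1)\<close> the event \<open>\<xi> > x / \<eta>\<close> is contained in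
  \<open>\<xi> > x / (A q\<^sup>k\<^sup>+\<^sup>1)\<close>, which reduces it to the joint tail; the cap \<open>D\<close> keeps all thresholds above \<open>x / D\<close>.\<close>
lemma grid_upper:
  assumes bnd: "\<And>t a b. t \<ge> t0 \<Longrightarrow> 0 < a \<Longrightarrow> a \<le> b \<Longrightarrow> joint_tail t {a..<b} \<le> c * U t * eta_integral s0 {a..<b}"
    and A: "A > 0" "q > 1" and "D > 0" "x > 0" "x / D \<ge> t0"
  shows "measure M {\<omega> \<in> space M. \<xi> \<omega> > x / \<eta> \<omega> \<and> \<eta> \<omega> \<in> {A..<A * q ^ N} \<and> \<eta> \<omega> \<le> D}
     \<le> (\<Sum>k<N. c * U (x / min (A * q ^ Suc k) D) * eta_integral s0 (geom_cell A q k))"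
proof -
  define th where "th k = x / min (A * q ^ Suc k) D" for k
  have "{\<omega> \<in> space M. \<xi> \<omega> > x / \<eta> \<omega> \<and> \<eta> \<omega> \<in> {A..<A * q ^ N} \<and> \<eta> \<omega> \<le> D}
      \<subseteq> (\<Union>k<N. {\<omega> \<in> space M. \<xi> \<omega> > th k \<and> \<eta> \<omega> \<in> geom_cell A q k})"
  proof safe
    fix \<omega> assume \<omega>: "\<omega> \<in> space M" "\<xi> \<omega> > x / \<eta> \<omega>" "\<eta> \<omega> \<in> {A..<A * q ^ N}" "\<eta> \<omega> \<le> D"
    then have "\<eta> \<omega> \<in> (\<Union>k<N. geom_cell A q k)"
      using UN_geom_cell[OF A, of N] by simp
    then obtain k where k: "k < N" "\<eta> \<omega> \<in> geom_cell A q k"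
      by blast
    have "\<eta> \<omega> > 0" using geom_cell_pos[OF A k(2)] .
    moreover have "\<eta> \<omega> \<le> min (A * q ^ Suc k) D" using k \<omega> by (auto simp: geom_cell_def)
    ultimately have "th k \<le> x / \<eta> \<omega>"
      unfolding th_def using \<open>x > 0\<close> by (intro divide_left_mono) auto
    then have "th k < \<xi> \<omega>"
      using \<omega>(2) by linarith
    then show "\<omega> \<in> (\<Union>k<N. {\<omega> \<in> space M. \<xi> \<omega> > th k \<and> \<eta> \<omega> \<in> geom_cell A q k})"
      using k \<omega>(1) by blast
  qed
  then have "measure M {\<omega> \<in> space M. \<xi> \<omega> > x / \<eta> \<omega> \<and> \<eta> \<omega> \<in> {A..<A * q ^ N} \<and> \<eta> \<omega> \<le> D}
      \<le> measure M (\<Union>k<N. {\<omega> \<in> space M. \<xi> \<omega> > th k \<and> \<eta> \<omega> \<in> geom_cell A q k})"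
    by (intro finite_measure_mono) (auto simp: geom_cell_def)
  also have "\<dots> \<le> (\<Sum>k<N. joint_tail (th k) (geom_cell A q k))"
    unfolding joint_tail_def by (intro finite_measure_subadditive_finite) (auto simp: geom_cell_def)
  also have "\<dots> \<le> (\<Sum>k<N. c * U (th k) * eta_integral s0 (geom_cell A q k))"
  proof (rule sum_mono)
    fix k
    have "x / D \<le> th k"
      unfolding th_def using \<open>x > 0\<close> \<open>D > 0\<close> A by (intro divide_left_mono) auto
    then show "joint_tail (th k) (geom_cell A q k) \<le> c * U (th k) * eta_integral s0 (geom_cell A q k)"
      unfolding geom_cell_def using A \<open>x / D \<ge> t0\<close> by (intro bnd) auto
  qed
  finally show ?thesis by (simp add: th_def)
qed

lemma grid_lower:
  assumes bnd: "\<And>t a b. t \<ge> t0 \<Longrightarrow> 0 < a \<Longrightarrow> a \<le> b \<Longrightarrow> c * U t * eta_integral s0 {a..<b} \<le> joint_tail t {a..<b}"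
    and A: "A > 0" "q > 1" and "x > 0" "x / (A * q ^ N) \<ge> t0"
  shows "(\<Sum>k<N. c * U (A * q ^ N + x / (A * q ^ k)) * eta_integral s0 (geom_cell A q k))
     \<le> measure M {\<omega> \<in> space M. \<xi> \<omega> > \<eta> \<omega> + x / \<eta> \<omega> \<and> \<eta> \<omega> \<in> {A..<A * q ^ N}}"
proof -
  define th where "th k = A * q ^ N + x / (A * q ^ k)" for k
  have "(\<Sum>k<N. c * U (th k) * eta_integral s0 (geom_cell A q k)) \<le> (\<Sum>k<N. joint_tail (th k) (geom_cell A q k))"
  proof (rule sum_mono)
    fix k assume "k \<in> {..<N}"
    then have "A * q ^ k \<le> A * q ^ N"
      using A by (intro mult_left_mono power_increasing) auto
    then have "x / (A * q ^ N) \<le> x / (A * q ^ k)"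
      using A \<open>x > 0\<close> by (intro divide_left_mono) auto
    then have "th k \<ge> t0"
      unfolding th_def using A \<open>x / (A * q ^ N) \<ge> t0\<close> by (smt (verit) zero_le_mult_iff zero_le_power)
    then show "c * U (th k) * eta_integral s0 (geom_cell A q k) \<le> joint_tail (th k) (geom_cell A q k)"
      unfolding geom_cell_def using A by (intro bnd) auto
  qed
  also have "\<dots> = measure M (\<Union>k<N. {\<omega> \<in> space M. \<xi> \<omega> > th k \<and> \<eta> \<omega> \<in> geom_cell A q k})"
    unfolding joint_tail_def
  proof (rule finite_measure_finite_Union[symmetric])
    show "disjoint_family_on (\<lambda>k. {\<omega> \<in> space M. \<xi> \<omega> > th k \<and> \<eta> \<omega> \<in> geom_cell A q k}) {..<N}"
      using disjoint_family_geom_cell[OF A] unfolding disjoint_family_on_def by blast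
  qed (auto simp: geom_cell_def)
  also have "\<dots> \<le> measure M {\<omega> \<in> space M. \<xi> \<omega> > \<eta> \<omega> + x / \<eta> \<omega> \<and> \<eta> \<omega> \<in> {A..<A * q ^ N}}"
  proof (rule finite_measure_mono, safe)
    fix \<omega> k assume "k < N" "\<omega> \<in> space M" "\<xi> \<omega> > th k" and cell: "\<eta> \<omega> \<in> geom_cell A q k"
    have "0 < A * q ^ k" "A \<le> A * q ^ k"
      using A by auto
    moreover have "A * q ^ Suc k \<le> A * q ^ N"
      using A \<open>k < N\<close> by (intro mult_left_mono power_increasing) auto
    ultimately have "A \<le> \<eta> \<omega>" "\<eta> \<omega> < A * q ^ N" "x / \<eta> \<omega> \<le> x / (A * q ^ k)"
      using cell \<open>x > 0\<close> by (auto simp: geom_cell_def intro!: divide_left_mono)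
    then show "\<xi> \<omega> > \<eta> \<omega> + x / \<eta> \<omega>" "\<eta> \<omega> \<in> {A..<A * q ^ N}"
      using \<open>\<xi> \<omega> > th k\<close> by (auto simp: th_def)
  qed auto
  finally show ?thesis by (simp add: th_def)
qed

lemma product_tail_le: "product_tail x \<le> measure M {\<omega> \<in> space M. \<xi> \<omega> > x / \<eta> \<omega> \<and> \<eta> \<omega> > 0}"
  unfolding product_tail_def
proof (rule finite_measure_mono_AE)
  show "AE \<omega> in M. \<omega> \<in> {\<omega> \<in> space M. (\<xi> \<omega> - \<eta> \<omega>) * \<eta> \<omega> > x}
      \<longrightarrow> \<omega> \<in> {\<omega> \<in> space M. \<xi> \<omega> > x / \<eta> \<omega> \<and> \<eta> \<omega> > 0}"
    using \<eta>_pos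
  proof eventually_elim
    case (elim \<omega>)
    show ?case
    proof
      assume "\<omega> \<in> {\<omega> \<in> space M. (\<xi> \<omega> - \<eta> \<omega>) * \<eta> \<omega> > x}"
      then have "x / \<eta> \<omega> < \<xi> \<omega> - \<eta> \<omega>" "\<omega> \<in> space M"
        using elim by (auto simp: divide_less_eq)
      then show "\<omega> \<in> {\<omega> \<in> space M. \<xi> \<omega> > x / \<eta> \<omega> \<and> \<eta> \<omega> > 0}"
        using elim by auto
    qed
  qed
qed measurable

lemma product_tail_ge:
  "A > 0 \<Longrightarrow> measure M {\<omega> \<in> space M. \<xi> \<omega> > \<eta> \<omega> + x / \<eta> \<omega> \<and> \<eta> \<omega> \<in> {A..<B}} \<le> product_tail x"
  unfolding product_tail_def
proof (intro finite_measure_mono subsetI)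
  fix \<omega> assume "A > 0" and \<omega>: "\<omega> \<in> {\<omega> \<in> space M. \<xi> \<omega> > \<eta> \<omega> + x / \<eta> \<omega> \<and> \<eta> \<omega> \<in> {A..<B}}"
  then have "\<eta> \<omega> > 0" "x / \<eta> \<omega> < \<xi> \<omega> - \<eta> \<omega>"
    by auto
  then show "\<omega> \<in> {\<omega> \<in> space M. (\<xi> \<omega> - \<eta> \<omega>) * \<eta> \<omega> > x}"
    using \<omega> by (simp add: divide_less_eq)
qed measurable

lemma cell_lower_estimate:
  assumes W: "integrable M (\<lambda>\<omega>. s0_pow \<alpha> (\<eta> \<omega>))" and A: "A > 0" "q > 1" and "0 \<le> e" "e \<le> 1"
    and U_lower: "(1 - e) * (q / (A * q ^ k)) powr (- \<alpha>) * U x \<le> U t"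
  shows "(1 - e)\<^sup>2 / (q powr \<alpha>)\<^sup>2 * eta_integral (s0_pow \<alpha>) (geom_cell A q k) * U x
      \<le> (1 - e) * U t * eta_integral s0 (geom_cell A q k)"
proof -
  define a S where "a = (A * q ^ k) powr \<alpha>" and "S = eta_integral s0 (geom_cell A q k)"
  have "S \<ge> 0"
    unfolding S_def using s0_pos by (intro eta_integral_nonneg s0_integrable less_imp_le)
      (auto simp: geom_cell_def)
  have "(A * q ^ Suc k) powr \<alpha> = q powr \<alpha> * a"
    using A by (simp add: a_def powr_mult[symmetric] algebra_simps)
  then have cell: "eta_integral (s0_pow \<alpha>) (geom_cell A q k) \<le> q powr \<alpha> * a * S"
    using eta_integral_s0_pow_geom_cell(2)[OF W \<alpha>_nonneg A, of k] by (simp add: S_def)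
  have ck_pow: "(q / (A * q ^ k)) powr (- \<alpha>) = a / q powr \<alpha>"
    using A by (simp add: a_def powr_minus_divide powr_divide)
  have "(1 - e)\<^sup>2 / (q powr \<alpha>)\<^sup>2 * eta_integral (s0_pow \<alpha>) (geom_cell A q k) * U x
      \<le> (1 - e)\<^sup>2 / (q powr \<alpha>)\<^sup>2 * (q powr \<alpha> * a * S) * U x"
    using cell U_pos[of x] by (intro mult_right_mono mult_left_mono) auto
  also have "\<dots> = (1 - e) * ((1 - e) * (q / (A * q ^ k)) powr (- \<alpha>) * U x) * S"
    unfolding ck_pow using A by (simp add: power2_eq_square field_simps)
  also have "\<dots> \<le> (1 - e) * U t * S"
    using U_lower \<open>S \<ge> 0\<close> \<open>e \<le> 1\<close> by (intro mult_right_mono mult_left_mono) auto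
  finally show ?thesis
    by (simp add: S_def)
qed

lemma cell_upper_estimate:
  assumes W: "integrable M (\<lambda>\<omega>. s0_pow \<alpha> (\<eta> \<omega>))" and A: "A > 0" "q > 1" and "0 \<le> e"
    and U_upper: "U t \<le> (1 + e) * (A * q ^ Suc k) powr \<alpha> * U x"
  shows "(1 + e) * U t * eta_integral s0 (geom_cell A q k)
      \<le> (1 + e)\<^sup>2 * q powr \<alpha> * eta_integral (s0_pow \<alpha>) (geom_cell A q k) * U x"
proof -
  define a S where "a = (A * q ^ k) powr \<alpha>" and "S = eta_integral s0 (geom_cell A q k)"
  have "S \<ge> 0"
    unfolding S_def using s0_pos by (intro eta_integral_nonneg s0_integrable less_imp_le)
      (auto simp: geom_cell_def)
  have "(A * q ^ Suc k) powr \<alpha> = q powr \<alpha> * a"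
    using A by (simp add: a_def powr_mult[symmetric] algebra_simps)
  then have "(1 + e) * U t * S \<le> (1 + e)\<^sup>2 * q powr \<alpha> * (a * S) * U x"
    using mult_right_mono[OF mult_left_mono[OF U_upper], of "1 + e" S] \<open>S \<ge> 0\<close> \<open>e \<ge> 0\<close>
    by (simp add: power2_eq_square mult_ac)
  also have "\<dots> \<le> (1 + e)\<^sup>2 * q powr \<alpha> * eta_integral (s0_pow \<alpha>) (geom_cell A q k) * U x"
    using eta_integral_s0_pow_geom_cell(1)[OF W \<alpha>_nonneg A, of k] U_pos[of x]
    by (intro mult_right_mono mult_left_mono) (auto simp: a_def S_def)
  finally show ?thesis by (simp add: S_def)
qed

text \<open>On \<open>\<eta> \<in> [A q\<^sup>k, A q\<^sup>k\<^sup>+\<^sup>1)\<close> with \<open>\<eta> < A q\<^sup>N\<close>, the event \<open>\<xi> > A q\<^sup>N + x / (A q\<^sup>k)\<close>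
  implies \<open>(\<xi> - \<eta>) \<eta> > x\<close>, and for large \<open>x\<close> its threshold is at most \<open>x q / (A q\<^sup>k)\<close>.\<close>
lemma product_tail_lower_grid:
  assumes W: "integrable M (\<lambda>\<omega>. s0_pow \<alpha> (\<eta> \<omega>))" and A: "A > 0" "q > 1" and "0 < e" "e < 1"
  shows "\<forall>\<^sub>F x in at_top. (1 - e)\<^sup>2 / (q powr \<alpha>)\<^sup>2 * eta_integral (s0_pow \<alpha>) {A..<A * q ^ N} * U x
           \<le> product_tail x"
proof -
  obtain t0 where t0: "\<And>t a b. t \<ge> t0 \<Longrightarrow> 0 < a \<Longrightarrow> a \<le> b \<Longrightarrow>
      (1 - e) * U t * eta_integral s0 {a..<b} \<le> joint_tail t {a..<b}"
    using joint_tail_approx[OF \<open>e > 0\<close>] by (auto simp: eventually_at_top_linorder)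
  have Aqk: "A * q ^ k > 0" for k
    using A by simp
  have ev_t0: "\<forall>\<^sub>F x in at_top. t0 \<le> x / (A * q ^ N)"
    using eventually_ge_at_top[of "t0 * (A * q ^ N)"]
    by eventually_elim (use Aqk in \<open>simp add: le_divide_eq\<close>)
  have ev_gap: "\<forall>\<^sub>F x in at_top. \<forall>k\<in>{..<N}. A * q ^ N + x / (A * q ^ k) \<le> x * (q / (A * q ^ k))"
  proof (intro eventually_ball_finite ballI)
    fix k
    show "\<forall>\<^sub>F x in at_top. A * q ^ N + x / (A * q ^ k) \<le> x * (q / (A * q ^ k))"
      using eventually_ge_at_top[of "A * q ^ N * (A * q ^ k) / (q - 1)"]
    proof eventually_elim
      case (elim x)
      then have "A * q ^ N * (A * q ^ k) \<le> (q - 1) * x"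
        using A by (simp add: divide_le_eq mult.commute)
      then have "A * q ^ N \<le> (q - 1) * x / (A * q ^ k)"
        using Aqk[of k] by (simp add: le_divide_eq)
      moreover have "x * (q / (A * q ^ k)) = x / (A * q ^ k) + (q - 1) * x / (A * q ^ k)"
        by (simp add: add_divide_distrib[symmetric] algebra_simps)
      ultimately show ?case
        by linarith
    qed
  qed simp
  have ev_U: "\<forall>\<^sub>F x in at_top. \<forall>k\<in>{..<N}.
      (1 - e) * (q / (A * q ^ k)) powr (- \<alpha>) * U x \<le> U (x * (q / (A * q ^ k)))"
    using A \<open>e > 0\<close> by (intro eventually_ball_finite ballI U_mult_lower) auto
  show ?thesis
    using eventually_gt_at_top[of 0] ev_t0 ev_gap ev_U
  proof eventually_elim
    case (elim x)
    have "(1 - e)\<^sup>2 / (q powr \<alpha>)\<^sup>2 * eta_integral (s0_pow \<alpha>) {A..<A * q ^ N} * U x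
        = (\<Sum>k<N. (1 - e)\<^sup>2 / (q powr \<alpha>)\<^sup>2 * eta_integral (s0_pow \<alpha>) (geom_cell A q k) * U x)"
      by (simp add: eta_integral_geom_cells[OF W A, symmetric] sum_distrib_left sum_distrib_right)
    also have "\<dots> \<le> (\<Sum>k<N. (1 - e) * U (A * q ^ N + x / (A * q ^ k)) * eta_integral s0 (geom_cell A q k))"
    proof (intro sum_mono cell_lower_estimate[OF W A])
      fix k assume "k \<in> {..<N}"
      then show "(1 - e) * (q / (A * q ^ k)) powr (- \<alpha>) * U x \<le> U (A * q ^ N + x / (A * q ^ k))"
        using elim(3,4) U_antimono by (meson order.trans)
    qed (use \<open>e < 1\<close> \<open>e > 0\<close> in auto)
    also have "\<dots> \<le> measure M {\<omega> \<in> space M. \<xi> \<omega> > \<eta> \<omega> + x / \<eta> \<omega> \<and> \<eta> \<omega> \<in> {A..<A * q ^ N}}"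
      by (rule grid_lower[OF t0 A elim(1,2)])
    also have "\<dots> \<le> product_tail x"
      by (rule product_tail_ge[OF A(1)])
    finally show ?case .
  qed
qed

lemma integral_s0_pow_nonneg: "(\<integral>\<omega>. s0_pow \<beta> (\<eta> \<omega>) \<partial>M) \<ge> 0"
  using \<eta>_pos by (intro integral_nonneg_AE) (auto elim!: eventually_mono intro: s0_pow_nonneg)

lemma ex_exhaustion_close:
  assumes h: "integrable M (\<lambda>\<omega>. h (\<eta> \<omega>))" and "e > 0"
  obtains n where "(\<integral>\<omega>. h (\<eta> \<omega>) \<partial>M) - e < eta_integral h (exhaustion n)"
  using order_tendstoD(1)[OF eta_integral_exhaustion[OF h], of "(\<integral>\<omega>. h (\<eta> \<omega>) \<partial>M) - e"] \<open>e > 0\<close>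
  by (auto simp: eventually_sequentially)

lemma product_tail_lower:
  assumes W: "integrable M (\<lambda>\<omega>. s0_pow \<alpha> (\<eta> \<omega>))" and "e > 0"
  shows "\<forall>\<^sub>F x in at_top. ((\<integral>\<omega>. s0_pow \<alpha> (\<eta> \<omega>) \<partial>M) - e) * U x \<le> product_tail x"
proof -
  define W where "W = (\<integral>\<omega>. s0_pow \<alpha> (\<eta> \<omega>) \<partial>M)"
  define \<delta> where "\<delta> = e / (2 * (W + 1))"
  have "W \<ge> 0" unfolding W_def by (rule integral_s0_pow_nonneg)
  then have "\<delta> > 0" "\<delta> * W \<le> e / 2"
    using \<open>e > 0\<close> by (auto simp: \<delta>_def field_simps)
  obtain n where n: "W - e / 2 < eta_integral (s0_pow \<alpha>) (exhaustion n)"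
    using ex_exhaustion_close[OF W, of "e / 2"] \<open>e > 0\<close> unfolding W_def by auto
  have "((\<lambda>q. (2 - q)\<^sup>2 / (q powr \<alpha>)\<^sup>2) \<longlongrightarrow> (2 - 1)\<^sup>2 / (1 powr \<alpha>)\<^sup>2) (at_right 1)"
    by (intro tendsto_intros) auto
  then obtain q where "1 < q" "q < 2" and c: "1 - \<delta> < (2 - q)\<^sup>2 / (q powr \<alpha>)\<^sup>2"
    using ex_right_neighbour_close[OF _ \<open>\<delta> > 0\<close>] by auto
  define A where "A = 1 / (real n + 1)"
  have "A > 0" by (simp add: A_def)
  obtain N where "(real n + 1) / A < q ^ N"
    using real_arch_pow[OF \<open>1 < q\<close>] by blast
  then have "real n + 1 \<le> A * q ^ N"
    using \<open>A > 0\<close> by (simp add: divide_less_eq mult.commute)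
  define L where "L = eta_integral (s0_pow \<alpha>) {A..<A * q ^ N}"
  have "eta_integral (s0_pow \<alpha>) (exhaustion n) \<le> L" "L \<le> W" "0 \<le> L"
    unfolding L_def W_def eta_integral_UNIV[symmetric] exhaustion_def
    using \<open>real n + 1 \<le> A * q ^ N\<close> s0_pow_nonneg
    by (auto simp: A_def intro!: eta_integral_mono_set[OF W] eta_integral_nonneg[OF W])
  moreover have "\<delta> * L \<le> \<delta> * W"
    using \<open>L \<le> W\<close> \<open>\<delta> > 0\<close> by (simp add: mult_left_mono)
  ultimately have "W - e \<le> (1 - \<delta>) * L"
    using n \<open>\<delta> * W \<le> e / 2\<close> by (simp add: algebra_simps)
  also have "\<dots> \<le> (2 - q)\<^sup>2 / (q powr \<alpha>)\<^sup>2 * L"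
    using c \<open>0 \<le> L\<close> by (intro mult_right_mono) auto
  finally have WL: "W - e \<le> (2 - q)\<^sup>2 / (q powr \<alpha>)\<^sup>2 * L" .
  have "\<forall>\<^sub>F x in at_top. (1 - (q - 1))\<^sup>2 / (q powr \<alpha>)\<^sup>2 * L * U x \<le> product_tail x"
    using product_tail_lower_grid[OF W \<open>A > 0\<close> \<open>1 < q\<close>, of "q - 1" N] \<open>1 < q\<close> \<open>q < 2\<close>
    by (simp add: L_def)
  then show ?thesis
  proof (rule eventually_mono)
    fix x
    assume "(1 - (q - 1))\<^sup>2 / (q powr \<alpha>)\<^sup>2 * L * U x \<le> product_tail x"
    moreover have "(W - e) * U x \<le> (2 - q)\<^sup>2 / (q powr \<alpha>)\<^sup>2 * L * U x"
      using WL U_pos[of x] by (intro mult_right_mono) auto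
    ultimately show "((\<integral>\<omega>. s0_pow \<alpha> (\<eta> \<omega>) \<partial>M) - e) * U x \<le> product_tail x"
      by (simp add: W_def)
  qed
qed

lemma product_tail_upper_grid:
  assumes W: "integrable M (\<lambda>\<omega>. s0_pow \<alpha> (\<eta> \<omega>))" and A: "A > 0" "q > 1" and "e > 0"
  shows "\<forall>\<^sub>F x in at_top. measure M {\<omega> \<in> space M. \<xi> \<omega> > x / \<eta> \<omega> \<and> \<eta> \<omega> \<in> {A..<A * q ^ N}}
           \<le> (1 + e)\<^sup>2 * q powr \<alpha> * eta_integral (s0_pow \<alpha>) {A..<A * q ^ N} * U x"
proof -
  obtain t0 where t0: "\<And>t a b. t \<ge> t0 \<Longrightarrow> 0 < a \<Longrightarrow> a \<le> b \<Longrightarrow>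
      joint_tail t {a..<b} \<le> (1 + e) * U t * eta_integral s0 {a..<b}"
    using joint_tail_approx[OF \<open>e > 0\<close>] by (auto simp: eventually_at_top_linorder)
  define D where "D = A * q ^ N"
  have "D > 0" "A * q ^ Suc k > 0" for k
    using A by (simp_all add: D_def)
  have ev_t0: "\<forall>\<^sub>F x in at_top. t0 \<le> x / D"
    using eventually_ge_at_top[of "t0 * D"]
    by eventually_elim (use \<open>D > 0\<close> in \<open>simp add: le_divide_eq\<close>)
  have ev_U: "\<forall>\<^sub>F x in at_top. \<forall>k\<in>{..<N}. U (x / (A * q ^ Suc k)) \<le> (1 + e) * (A * q ^ Suc k) powr \<alpha> * U x"
    using \<open>e > 0\<close> \<open>\<And>k. A * q ^ Suc k > 0\<close> by (intro eventually_ball_finite ballI U_div_upper) auto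
  show ?thesis
    using eventually_gt_at_top[of 0] ev_t0 ev_U
  proof eventually_elim
    case (elim x)
    have "measure M {\<omega> \<in> space M. \<xi> \<omega> > x / \<eta> \<omega> \<and> \<eta> \<omega> \<in> {A..<A * q ^ N}}
        = measure M {\<omega> \<in> space M. \<xi> \<omega> > x / \<eta> \<omega> \<and> \<eta> \<omega> \<in> {A..<A * q ^ N} \<and> \<eta> \<omega> \<le> D}"
      by (rule arg_cong[where f = "measure M"]) (auto simp: D_def)
    also have "\<dots> \<le> (\<Sum>k<N. (1 + e) * U (x / min (A * q ^ Suc k) D) * eta_integral s0 (geom_cell A q k))"
      by (rule grid_upper[OF t0 A \<open>D > 0\<close> elim(1,2)])
    also have "\<dots> = (\<Sum>k<N. (1 + e) * U (x / (A * q ^ Suc k)) * eta_integral s0 (geom_cell A q k))"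
    proof (rule sum.cong)
      fix k assume "k \<in> {..<N}"
      then have "A * q ^ Suc k \<le> D"
        unfolding D_def using A by (intro mult_left_mono power_increasing) auto
      then show "(1 + e) * U (x / min (A * q ^ Suc k) D) * eta_integral s0 (geom_cell A q k)
          = (1 + e) * U (x / (A * q ^ Suc k)) * eta_integral s0 (geom_cell A q k)"
        by (simp add: min_absorb1)
    qed simp
    also have "\<dots> \<le> (\<Sum>k<N. (1 + e)\<^sup>2 * q powr \<alpha> * eta_integral (s0_pow \<alpha>) (geom_cell A q k) * U x)"
      using elim(3) \<open>e > 0\<close> by (intro sum_mono cell_upper_estimate[OF W A]) auto
    also have "\<dots> = (1 + e)\<^sup>2 * q powr \<alpha> * eta_integral (s0_pow \<alpha>) {A..<A * q ^ N} * U x"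
      by (simp add: eta_integral_geom_cells[OF W A, symmetric] sum_distrib_left sum_distrib_right)
    finally show ?case .
  qed
qed

text \<open>Small values of \<open>\<eta>\<close> push the threshold \<open>x / \<eta>\<close> beyond \<open>x / A\<close>, while the mass of \<open>s0(\<eta>)\<close>
  outside \<open>[A, B)\<close> is small.\<close>
lemma small_eta_negligible:
  assumes "e > 0"
  obtains A where "A > 0"
    and "\<forall>\<^sub>F x in at_top. measure M {\<omega> \<in> space M. \<xi> \<omega> > x / \<eta> \<omega> \<and> 0 < \<eta> \<omega> \<and> \<eta> \<omega> < A} \<le> e * U x"
proof -
  define e1 where "e1 = min (e / 2) (1 / 2)"
  have "0 < e1" "e1 < 1" "2 * e1 \<le> e"
    using \<open>e > 0\<close> by (auto simp: e1_def)
  obtain n where n: "1 - e1 < eta_integral s0 (exhaustion n)"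
    using ex_exhaustion_close[OF s0_integrable \<open>0 < e1\<close>] by (auto simp: expectation_s0_eq_1)
  define A B where "A = 1 / (real n + 1)" and "B = real n + 1"
  have "0 < A" "A \<le> 1" "1 \<le> B"
    unfolding A_def B_def by simp_all
  then have "A \<le> B"
    by linarith
  obtain t0 where t0: "\<And>t. t \<ge> t0 \<Longrightarrow> (1 - e1) * U t * eta_integral s0 {A..<B} \<le> joint_tail t {A..<B}"
    using joint_tail_approx[OF \<open>0 < e1\<close>] \<open>0 < A\<close> \<open>A \<le> B\<close> by (auto simp: eventually_at_top_linorder)
  have "\<forall>\<^sub>F x in at_top. measure M {\<omega> \<in> space M. \<xi> \<omega> > x / \<eta> \<omega> \<and> 0 < \<eta> \<omega> \<and> \<eta> \<omega> < A} \<le> e * U x"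
    using eventually_ge_at_top[of "max 0 (t0 * A)"]
  proof eventually_elim
    case (elim x)
    have "x \<le> x / A" "t0 \<le> x / A"
      using elim \<open>0 < A\<close> \<open>A \<le> 1\<close> mult_left_mono[of A 1 x] by (auto simp: le_divide_eq)
    have "{\<omega> \<in> space M. \<xi> \<omega> > x / \<eta> \<omega> \<and> 0 < \<eta> \<omega> \<and> \<eta> \<omega> < A}
        \<subseteq> {\<omega> \<in> space M. \<xi> \<omega> > x / A} - {\<omega> \<in> space M. \<xi> \<omega> > x / A \<and> \<eta> \<omega> \<in> {A..<B}}"
    proof (intro subsetI)
      fix \<omega> assume \<omega>: "\<omega> \<in> {\<omega> \<in> space M. \<xi> \<omega> > x / \<eta> \<omega> \<and> 0 < \<eta> \<omega> \<and> \<eta> \<omega> < A}"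
      then have "x / A \<le> x / \<eta> \<omega>"
        using elim by (intro divide_left_mono) auto
      with \<omega> show "\<omega> \<in> {\<omega> \<in> space M. \<xi> \<omega> > x / A} - {\<omega> \<in> space M. \<xi> \<omega> > x / A \<and> \<eta> \<omega> \<in> {A..<B}}"
        by auto
    qed
    then have "measure M {\<omega> \<in> space M. \<xi> \<omega> > x / \<eta> \<omega> \<and> 0 < \<eta> \<omega> \<and> \<eta> \<omega> < A}
        \<le> U (x / A) - joint_tail (x / A) {A..<B}"
      unfolding U_def joint_tail_def
      by (subst finite_measure_Diff[symmetric]) (auto intro!: finite_measure_mono)
    also have "\<dots> \<le> U (x / A) - (1 - e1) * U (x / A) * (1 - e1)"
    proof -
      have "(1 - e1) * U (x / A) * (1 - e1) \<le> (1 - e1) * U (x / A) * eta_integral s0 {A..<B}"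
        using n U_pos[of "x / A"] \<open>e1 < 1\<close>
        by (intro mult_left_mono) (auto simp: A_def B_def exhaustion_def)
      then show ?thesis
        using t0[OF \<open>t0 \<le> x / A\<close>] by linarith
    qed
    also have "\<dots> \<le> 2 * e1 * U (x / A)"
      using U_pos[of "x / A"] \<open>0 < e1\<close> by (simp add: algebra_simps)
    also have "\<dots> \<le> e * U x"
      using \<open>2 * e1 \<le> e\<close> U_antimono[OF \<open>x \<le> x / A\<close>] U_pos[of "x / A"] \<open>0 < e1\<close>
      by (intro mult_mono) auto
    finally show ?case .
  qed
  with \<open>0 < A\<close> show ?thesis by (rule that)
qed

definition tail_negligible :: bool where
  "tail_negligible \<longleftrightarrow> (\<forall>e>0. \<exists>B. \<forall>\<^sub>F x in at_top.
     measure M {\<omega> \<in> space M. \<xi> \<omega> > x / \<eta> \<omega> \<and> \<eta> \<omega> \<ge> B} \<le> e * U x)"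

lemma product_tail_le_split:
  assumes "B \<le> D"
  shows "product_tail x \<le> measure M {\<omega> \<in> space M. \<xi> \<omega> > x / \<eta> \<omega> \<and> 0 < \<eta> \<omega> \<and> \<eta> \<omega> < A}
      + measure M {\<omega> \<in> space M. \<xi> \<omega> > x / \<eta> \<omega> \<and> \<eta> \<omega> \<in> {A..<D}}
      + measure M {\<omega> \<in> space M. \<xi> \<omega> > x / \<eta> \<omega> \<and> \<eta> \<omega> \<ge> B}" (is "_ \<le> measure M ?S1 + measure M ?S2 + measure M ?S3")
proof -
  have sets: "?S1 \<in> sets M" "?S2 \<in> sets M" "?S3 \<in> sets M"
    by measurable
  have "product_tail x \<le> measure M {\<omega> \<in> space M. \<xi> \<omega> > x / \<eta> \<omega> \<and> \<eta> \<omega> > 0}"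
    by (rule product_tail_le)
  also have "\<dots> \<le> measure M (?S1 \<union> ?S2 \<union> ?S3)"
    using sets \<open>B \<le> D\<close> by (intro finite_measure_mono) auto
  also have "\<dots> \<le> measure M ?S1 + measure M ?S2 + measure M ?S3"
    using sets measure_Un_le[of "?S1 \<union> ?S2" M ?S3] measure_Un_le[of ?S1 M ?S2] by auto
  finally show ?thesis .
qed

lemma product_tail_upper:
  assumes W: "integrable M (\<lambda>\<omega>. s0_pow \<alpha> (\<eta> \<omega>))" and tail_negligible and "e > 0"
  shows "\<forall>\<^sub>F x in at_top. product_tail x \<le> ((\<integral>\<omega>. s0_pow \<alpha> (\<eta> \<omega>) \<partial>M) + e) * U x"
proof -
  define W where "W = (\<integral>\<omega>. s0_pow \<alpha> (\<eta> \<omega>) \<partial>M)"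
  define \<delta> where "\<delta> = e / (3 * (W + 1))"
  have "W \<ge> 0" unfolding W_def by (rule integral_s0_pow_nonneg)
  then have "\<delta> > 0" "\<delta> * W \<le> e / 3"
    using \<open>e > 0\<close> by (auto simp: \<delta>_def field_simps)
  obtain A where "A > 0" and small: "\<forall>\<^sub>F x in at_top.
      measure M {\<omega> \<in> space M. \<xi> \<omega> > x / \<eta> \<omega> \<and> 0 < \<eta> \<omega> \<and> \<eta> \<omega> < A} \<le> e / 3 * U x"
    using small_eta_negligible[of "e / 3"] \<open>e > 0\<close> by auto
  have "e / 3 > 0"
    using \<open>e > 0\<close> by simp
  with \<open>tail_negligible\<close> obtain B where large: "\<forall>\<^sub>F x in at_top.
      measure M {\<omega> \<in> space M. \<xi> \<omega> > x / \<eta> \<omega> \<and> \<eta> \<omega> \<ge> B} \<le> e / 3 * U x"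
    unfolding tail_negligible_def by blast
  have "((\<lambda>q. q\<^sup>2 * q powr \<alpha>) \<longlongrightarrow> 1\<^sup>2 * 1 powr \<alpha>) (at_right 1)"
    by (intro tendsto_intros) auto
  then obtain q where "1 < q" and c: "q\<^sup>2 * q powr \<alpha> < 1 + \<delta>"
    using ex_right_neighbour_close[OF _ \<open>\<delta> > 0\<close>] by auto
  obtain N where "max A B / A < q ^ N"
    using real_arch_pow[OF \<open>1 < q\<close>] by blast
  then have "B \<le> A * q ^ N"
    using \<open>A > 0\<close> by (simp add: divide_less_eq mult.commute)
  define L where "L = eta_integral (s0_pow \<alpha>) {A..<A * q ^ N}"
  have "L \<le> W" "0 \<le> L"
    unfolding L_def W_def eta_integral_UNIV[symmetric] using s0_pow_nonneg
    by (auto intro!: eta_integral_mono_set[OF W] eta_integral_nonneg[OF W])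
  have "q\<^sup>2 * q powr \<alpha> * L \<le> (1 + \<delta>) * L"
    using c \<open>0 \<le> L\<close> by (intro mult_right_mono) auto
  also have "\<dots> = L + \<delta> * L"
    by (simp add: algebra_simps)
  also have "\<dots> \<le> W + e / 3"
    using \<open>L \<le> W\<close> \<open>\<delta> * W \<le> e / 3\<close> mult_left_mono[OF \<open>L \<le> W\<close> less_imp_le[OF \<open>\<delta> > 0\<close>]]
    by linarith
  finally have "q\<^sup>2 * q powr \<alpha> * L \<le> W + e / 3" .
  moreover have "\<forall>\<^sub>F x in at_top. measure M {\<omega> \<in> space M. \<xi> \<omega> > x / \<eta> \<omega> \<and> \<eta> \<omega> \<in> {A..<A * q ^ N}}
      \<le> q\<^sup>2 * q powr \<alpha> * L * U x"
    using product_tail_upper_grid[OF W \<open>A > 0\<close> \<open>1 < q\<close>, of "q - 1" N] \<open>1 < q\<close> by (simp add: L_def)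
  ultimately have grid: "\<forall>\<^sub>F x in at_top. measure M {\<omega> \<in> space M. \<xi> \<omega> > x / \<eta> \<omega> \<and> \<eta> \<omega> \<in> {A..<A * q ^ N}}
      \<le> (W + e / 3) * U x"
    by (elim eventually_mono) (use U_pos in \<open>meson mult_right_mono order.trans less_imp_le\<close>)
  show ?thesis
    using small grid large
  proof eventually_elim
    case (elim x)
    then show ?case
      using product_tail_le_split[OF \<open>B \<le> A * q ^ N\<close>, of x A] by (simp add: W_def algebra_simps)
  qed
qed

lemma integral_s0_pow_pos:
  assumes "integrable M (\<lambda>\<omega>. s0_pow \<beta> (\<eta> \<omega>))"
  shows "(\<integral>\<omega>. s0_pow \<beta> (\<eta> \<omega>) \<partial>M) > 0"
proof -
  have nonneg: "AE \<omega> in M. 0 \<le> s0_pow \<beta> (\<eta> \<omega>)"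
    using \<eta>_pos by eventually_elim (rule s0_pow_nonneg)
  have "\<not> (AE \<omega> in M. s0_pow \<beta> (\<eta> \<omega>) = 0)"
  proof
    assume "AE \<omega> in M. s0_pow \<beta> (\<eta> \<omega>) = 0"
    with \<eta>_pos have "AE \<omega> in M. False"
    proof eventually_elim
      case (elim \<omega>)
      then show False
        using s0_pos[of "\<eta> \<omega>"] by (simp add: s0_pow_def)
    qed
    then show False by simp
  qed
  then show ?thesis
    using integral_nonneg_eq_0_iff_AE[OF assms nonneg] integral_nonneg_AE[OF nonneg] by linarith
qed

lemma product_tail_U_ratio:
  assumes W: "integrable M (\<lambda>\<omega>. s0_pow \<alpha> (\<eta> \<omega>))" and tail_negligible
  shows "((\<lambda>x. product_tail x / U x) \<longlongrightarrow> (\<integral>\<omega>. s0_pow \<alpha> (\<eta> \<omega>) \<partial>M)) at_top"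
proof -
  define W where "W = (\<integral>\<omega>. s0_pow \<alpha> (\<eta> \<omega>) \<partial>M)"
  have "((\<lambda>x. product_tail x / U x) \<longlongrightarrow> W) at_top"
  proof (rule order_tendstoI)
    fix a assume "a < W"
    then have "(W - a) / 2 > 0" "a < W - (W - a) / 2"
      by (simp_all add: field_simps)
    from product_tail_lower[OF W this(1)]
    show "\<forall>\<^sub>F x in at_top. a < product_tail x / U x"
    proof eventually_elim
      case (elim x)
      have "a * U x < (W - (W - a) / 2) * U x"
        using \<open>a < W - (W - a) / 2\<close> U_pos[of x] by (intro mult_strict_right_mono)
      with elim have "a * U x < product_tail x"
        unfolding W_def by linarith
      then show ?case
        using U_pos[of x] by (simp add: less_divide_eq)
    qed
  next
    fix a assume "a > W"
    then have "(a - W) / 2 > 0" "W + (a - W) / 2 < a"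
      by (simp_all add: field_simps)
    from product_tail_upper[OF W \<open>tail_negligible\<close> this(1)]
    show "\<forall>\<^sub>F x in at_top. product_tail x / U x < a"
    proof eventually_elim
      case (elim x)
      have "(W + (a - W) / 2) * U x < a * U x"
        using \<open>W + (a - W) / 2 < a\<close> U_pos[of x] by (intro mult_strict_right_mono)
      with elim have "product_tail x < a * U x"
        unfolding W_def by linarith
      then show ?case
        using U_pos[of x] by (simp add: divide_less_eq)
    qed
  qed
  then show ?thesis by (simp add: W_def)
qed

theorem product_tail_asymp:
  assumes W: "integrable M (\<lambda>\<omega>. s0_pow \<alpha> (\<eta> \<omega>))" and tail_negligible
  shows "product_tail \<sim>[at_top] (\<lambda>x. (\<integral>\<omega>. s0_pow \<alpha> (\<eta> \<omega>) \<partial>M) * F_tail x)"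
proof -
  define W where "W = (\<integral>\<omega>. s0_pow \<alpha> (\<eta> \<omega>) \<partial>M)"
  have "W > 0" unfolding W_def by (rule integral_s0_pow_pos[OF W])
  have PU: "((\<lambda>x. product_tail x / U x) \<longlongrightarrow> W) at_top"
    unfolding W_def by (rule product_tail_U_ratio[OF W \<open>tail_negligible\<close>])
  have lim: "((\<lambda>x. (product_tail x / U x) / (W * (F_tail x / U x))) \<longlongrightarrow> W / (W * 1)) at_top"
    using \<open>W > 0\<close> by (intro tendsto_intros PU F_tail_U_ratio) auto
  have "\<forall>\<^sub>F x in at_top. (product_tail x / U x) / (W * (F_tail x / U x)) = product_tail x / (W * F_tail x)"
    using eventually_F_tail_pos
  proof eventually_elim
    case (elim x)
    then show ?case using U_pos[of x] by (simp add: field_simps)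
  qed
  from tendsto_cong[OF this, THEN iffD1, OF lim] \<open>W > 0\<close>
  have "((\<lambda>x. product_tail x / (W * F_tail x)) \<longlongrightarrow> 1) at_top"
    by simp
  then show ?thesis
    unfolding W_def by (rule asymp_equivI')
qed

section \<open>Negligibility of large values of \<open>\<eta>\<close>\<close>

lemma eta_integral_upper_tail_small:
  assumes h: "integrable M (\<lambda>\<omega>. h (\<eta> \<omega>))" and h_nonneg: "\<And>y. y > 0 \<Longrightarrow> h y \<ge> 0" and "e > 0"
  obtains B where "B \<ge> 1" "eta_integral h {B..} \<le> e"
proof -
  obtain n where n: "(\<integral>\<omega>. h (\<eta> \<omega>) \<partial>M) - e < eta_integral h (exhaustion n)"
    using ex_exhaustion_close[OF h \<open>e > 0\<close>] .
  have "exhaustion n \<inter> {real n + 1..} = {}"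
    by (auto simp: exhaustion_def)
  then have "eta_integral h (exhaustion n) + eta_integral h {real n + 1..} = eta_integral h (exhaustion n \<union> {real n + 1..})"
    by (intro eta_integral_Un[OF h, symmetric]) auto
  also have "\<dots> \<le> eta_integral h UNIV"
    by (intro eta_integral_mono_set[OF h h_nonneg]) auto
  finally have "eta_integral h {real n + 1..} \<le> e"
    using n by (simp add: eta_integral_UNIV)
  then show ?thesis
    by (intro that[of "real n + 1"]) auto
qed

text \<open>A cut \<open>c\<close> splits the range of \<open>\<eta>\<close> at \<open>c x\<close>: below it a Potter-type bound controls \<open>U (x / \<eta>)\<close>,
  above it the event \<open>\<eta> > c x\<close> is already negligible compared to \<open>U x\<close>.\<close>
definition admissible_cut :: "real \<Rightarrow> real \<Rightarrow> real \<Rightarrow> (real \<Rightarrow> real) \<Rightarrow> bool" where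
  "admissible_cut C \<beta> t0 c \<longleftrightarrow>
     (\<forall>\<^sub>F x in at_top. t0 \<le> x / c x \<and> 1 \<le> c x \<and>
        (\<forall>y. 1 \<le> y \<and> y \<le> c x \<longrightarrow> U (x / y) \<le> C * y powr \<beta> * U x)) \<and>
     (\<forall>e>0. \<forall>\<^sub>F x in at_top. G_tail (c x) \<le> e * U x)"

lemma cut_cell_estimate:
  assumes V: "integrable M (\<lambda>\<omega>. s0_pow \<beta> (\<eta> \<omega>))" and "\<beta> \<ge> 0" "C \<ge> 0" "a \<ge> 0" "B \<ge> 1" "c \<ge> 1"
    and potter: "\<And>y. 1 \<le> y \<Longrightarrow> y \<le> c \<Longrightarrow> U (x / y) \<le> C * y powr \<beta> * U x"
  shows "a * U (x / min (B * 2 ^ Suc k) c) * eta_integral s0 (geom_cell B 2 k)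
      \<le> a * C * 2 powr \<beta> * eta_integral (s0_pow \<beta>) (geom_cell B 2 k) * U x"
proof -
  define m where "m = min (B * 2 ^ Suc k) c"
  have "1 \<le> B * 2 ^ Suc k"
    using \<open>B \<ge> 1\<close> by (metis mult_mono' one_le_numeral one_le_power order.trans zero_le_one mult_1_left)
  then have "1 \<le> m" "m \<le> c" "m \<le> 2 * (B * 2 ^ k)"
    using \<open>c \<ge> 1\<close> by (auto simp: m_def)
  have S: "eta_integral s0 (geom_cell B 2 k) \<ge> 0"
    using s0_pos by (intro eta_integral_nonneg s0_integrable less_imp_le) (auto simp: geom_cell_def)
  have "m powr \<beta> \<le> (2 * (B * 2 ^ k)) powr \<beta>"
    using \<open>1 \<le> m\<close> \<open>m \<le> 2 * (B * 2 ^ k)\<close> \<open>\<beta> \<ge> 0\<close> by (intro powr_mono2) auto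
  also have "\<dots> = 2 powr \<beta> * (B * 2 ^ k) powr \<beta>"
    using \<open>B \<ge> 1\<close> by (simp add: powr_mult)
  finally have "U (x / m) \<le> C * (2 powr \<beta> * (B * 2 ^ k) powr \<beta>) * U x"
    using potter[OF \<open>1 \<le> m\<close> \<open>m \<le> c\<close>] \<open>C \<ge> 0\<close> U_pos[of x]
    by (meson mult_left_mono mult_right_mono order.trans less_imp_le)
  then have "a * U (x / m) * eta_integral s0 (geom_cell B 2 k)
      \<le> a * (C * (2 powr \<beta> * (B * 2 ^ k) powr \<beta>) * U x) * eta_integral s0 (geom_cell B 2 k)"
    using S \<open>a \<ge> 0\<close> by (intro mult_right_mono mult_left_mono)
  also have "\<dots> = a * C * 2 powr \<beta> * ((B * 2 ^ k) powr \<beta> * eta_integral s0 (geom_cell B 2 k)) * U x"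
    by (simp add: mult_ac)
  also have "\<dots> \<le> a * C * 2 powr \<beta> * eta_integral (s0_pow \<beta>) (geom_cell B 2 k) * U x"
    using eta_integral_s0_pow_geom_cell(1)[OF V \<open>\<beta> \<ge> 0\<close>, of B 2 k] \<open>B \<ge> 1\<close> \<open>a \<ge> 0\<close> \<open>C \<ge> 0\<close> U_pos[of x]
    by (intro mult_right_mono mult_left_mono) auto
  finally show ?thesis by (simp add: m_def)
qed

lemma tail_bound_with_cut:
  assumes V: "integrable M (\<lambda>\<omega>. s0_pow \<beta> (\<eta> \<omega>))" and "\<beta> \<ge> 0" "C \<ge> 0" "B \<ge> 1" "x > 0"
    and t0: "\<And>t a b. t \<ge> t0 \<Longrightarrow> 0 < a \<Longrightarrow> a \<le> b \<Longrightarrow>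
      joint_tail t {a..<b} \<le> (1 + 1 / 2) * U t * eta_integral s0 {a..<b}"
    and "t0 \<le> x / c" "1 \<le> c" and potter: "\<And>y. 1 \<le> y \<Longrightarrow> y \<le> c \<Longrightarrow> U (x / y) \<le> C * y powr \<beta> * U x"
  shows "measure M {\<omega> \<in> space M. \<xi> \<omega> > x / \<eta> \<omega> \<and> \<eta> \<omega> \<ge> B}
      \<le> (1 + 1 / 2) * C * 2 powr \<beta> * eta_integral (s0_pow \<beta>) {B..} * U x + G_tail c"
proof -
  define K where "K = (1 + 1 / 2) * C * 2 powr \<beta>"
  obtain m where "c / B < 2 ^ m"
    using real_arch_pow[of 2 "c / B"] by auto
  then have "c < B * 2 ^ m"
    using \<open>B \<ge> 1\<close> by (simp add: divide_less_eq mult.commute)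
  define R where "R = {\<omega> \<in> space M. \<xi> \<omega> > x / \<eta> \<omega> \<and> \<eta> \<omega> \<in> {B..<B * 2 ^ m} \<and> \<eta> \<omega> \<le> c}"
  have "measure M {\<omega> \<in> space M. \<xi> \<omega> > x / \<eta> \<omega> \<and> \<eta> \<omega> \<ge> B} \<le> measure M (R \<union> {\<omega> \<in> space M. \<eta> \<omega> > c})"
    using \<open>c < B * 2 ^ m\<close> unfolding R_def by (intro finite_measure_mono) auto
  also have "\<dots> \<le> measure M R + G_tail c"
    unfolding R_def G_tail_def by (intro measure_Un_le) measurable
  also have "measure M R \<le> (\<Sum>k<m. (1 + 1 / 2) * U (x / min (B * 2 ^ Suc k) c) * eta_integral s0 (geom_cell B 2 k))"
    unfolding R_def using assms \<open>B \<ge> 1\<close> by (intro grid_upper[OF t0]) auto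
  also have "\<dots> \<le> (\<Sum>k<m. K * eta_integral (s0_pow \<beta>) (geom_cell B 2 k) * U x)"
    unfolding K_def using assms by (intro sum_mono cut_cell_estimate[OF V]) auto
  also have "\<dots> = K * eta_integral (s0_pow \<beta>) {B..<B * 2 ^ m} * U x"
    using \<open>B \<ge> 1\<close> by (simp add: eta_integral_geom_cells[OF V, symmetric] sum_distrib_left sum_distrib_right)
  also have "\<dots> \<le> K * eta_integral (s0_pow \<beta>) {B..} * U x"
    using \<open>C \<ge> 0\<close> U_pos[of x]
    by (intro mult_right_mono mult_left_mono eta_integral_mono_set[OF V s0_pow_nonneg]) (auto simp: K_def)
  finally show ?thesis
    by (simp add: K_def)
qed

lemma tail_negligible_by_cuts:
  assumes "\<beta> \<ge> 0" and V: "integrable M (\<lambda>\<omega>. s0_pow \<beta> (\<eta> \<omega>))" and "C \<ge> 0"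
    and cuts: "\<And>t0. \<exists>c. admissible_cut C \<beta> t0 c"
  shows tail_negligible
  unfolding tail_negligible_def
proof (intro allI impI)
  fix e :: real assume "e > 0"
  define K where "K = (1 + 1 / 2) * C * 2 powr \<beta>"
  define e' where "e' = e / (2 * (K + 1))"
  have "K \<ge> 0" using \<open>C \<ge> 0\<close> by (simp add: K_def)
  then have "e' > 0" "K * e' \<le> e / 2"
    using \<open>e > 0\<close> by (auto simp: e'_def field_simps)
  obtain B where "B \<ge> 1" and B: "eta_integral (s0_pow \<beta>) {B..} \<le> e'"
    using eta_integral_upper_tail_small[OF V s0_pow_nonneg \<open>e' > 0\<close>] by blast
  obtain t0 where t0: "\<And>t a b. t \<ge> t0 \<Longrightarrow> 0 < a \<Longrightarrow> a \<le> b \<Longrightarrow>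
      joint_tail t {a..<b} \<le> (1 + 1 / 2) * U t * eta_integral s0 {a..<b}"
    using joint_tail_approx[of "1 / 2"] by (auto simp: eventually_at_top_linorder)
  from cuts[of t0] obtain c where c: "admissible_cut C \<beta> t0 c"
    by blast
  have "\<forall>\<^sub>F x in at_top. G_tail (c x) \<le> e / 2 * U x"
    using conjunct2[OF c[unfolded admissible_cut_def], rule_format, of "e / 2"] \<open>e > 0\<close> by simp
  with eventually_gt_at_top[of 0] conjunct1[OF c[unfolded admissible_cut_def]]
  have "\<forall>\<^sub>F x in at_top. measure M {\<omega> \<in> space M. \<xi> \<omega> > x / \<eta> \<omega> \<and> \<eta> \<omega> \<ge> B} \<le> e * U x"
  proof eventually_elim
    case (elim x)
    have "K * eta_integral (s0_pow \<beta>) {B..} * U x \<le> e / 2 * U x"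
      using B \<open>K \<ge> 0\<close> \<open>K * e' \<le> e / 2\<close> U_pos[of x]
      by (intro mult_right_mono order.trans[OF mult_left_mono \<open>K * e' \<le> e / 2\<close>]) auto
    moreover have "measure M {\<omega> \<in> space M. \<xi> \<omega> > x / \<eta> \<omega> \<and> \<eta> \<omega> \<ge> B}
        \<le> K * eta_integral (s0_pow \<beta>) {B..} * U x + G_tail (c x)"
      unfolding K_def using elim
      by (intro tail_bound_with_cut[OF V \<open>\<beta> \<ge> 0\<close> \<open>C \<ge> 0\<close> \<open>B \<ge> 1\<close> \<open>x > 0\<close> t0]) auto
    ultimately show ?case
      using elim(3) by linarith
  qed
  then show "\<exists>B. \<forall>\<^sub>F x in at_top. measure M {\<omega> \<in> space M. \<xi> \<omega> > x / \<eta> \<omega> \<and> \<eta> \<omega> \<ge> B} \<le> e * U x"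
    by blast
qed

lemma U_potter_bound:
  assumes "\<epsilon> > 0"
  obtains x1 where "x1 \<ge> 1"
    and "\<And>x y. 1 \<le> y \<Longrightarrow> y \<le> x / x1 \<Longrightarrow> U (x / y) \<le> 2 powr (\<alpha> + \<epsilon>) * y powr (\<alpha> + \<epsilon>) * U x"
proof -
  define c where "c = 2 powr (\<alpha> + \<epsilon>)"
  have "c \<ge> 1"
    using \<alpha>_nonneg assms unfolding c_def by (intro ge_one_powr_ge_zero) auto
  have "((\<lambda>t. U (t * (1 / 2)) / U t) \<longlongrightarrow> 2 powr \<alpha>) at_top"
    using U_reg_var[of "1 / 2"] by (simp add: powr_minus_divide powr_divide)
  moreover have "2 powr \<alpha> < c"
    unfolding c_def using assms by (intro powr_less_mono) auto
  ultimately have "\<forall>\<^sub>F t in at_top. U (t * (1 / 2)) / U t < c"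
    by (rule order_tendstoD(2))
  then have "\<forall>\<^sub>F t in at_top. U (t / 2) \<le> c * U t"
    by eventually_elim (use U_pos in \<open>simp add: divide_less_eq less_imp_le\<close>)
  then obtain x0 where x0: "\<And>t. t \<ge> x0 \<Longrightarrow> U (t / 2) \<le> c * U t"
    by (auto simp: eventually_at_top_linorder)
  define x1 where "x1 = max x0 1"
  have "x1 \<ge> 1" and step: "\<And>t. t \<ge> x1 \<Longrightarrow> U (t / 2) \<le> c * U t"
    using x0 by (auto simp: x1_def)
  have iter: "U (x / 2 ^ Suc j) \<le> c ^ Suc j * U x" if "x1 \<le> x / 2 ^ j" for j x
    using halving_iterate[of x1 U c] step \<open>x1 \<ge> 1\<close> \<open>c \<ge> 1\<close> that by simp
  have "U (x / y) \<le> c * y powr (\<alpha> + \<epsilon>) * U x" if "1 \<le> y" "y \<le> x / x1" for x y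
  proof -
    obtain j where j: "2 ^ j \<le> y" "y < 2 ^ Suc j"
      using ex_power_bracket[OF \<open>1 \<le> y\<close>, of 2] by auto
    have "x / x1 > 0"
      using that by linarith
    then have "x > 0"
      using \<open>x1 \<ge> 1\<close> by (simp add: zero_less_divide_iff)
    have "x1 \<le> x / y"
      using that \<open>x1 \<ge> 1\<close> by (simp add: le_divide_eq divide_le_eq mult.commute)
    moreover have "x / y \<le> x / 2 ^ j" "x / 2 ^ Suc j \<le> x / y"
      using j \<open>x > 0\<close> \<open>1 \<le> y\<close> by (auto intro!: divide_left_mono)
    ultimately have "U (x / y) \<le> c ^ Suc j * U x"
      using iter[of x j] U_antimono[of "x / 2 ^ Suc j" "x / y"] by linarith
    also have "c ^ Suc j = c * (2 ^ j) powr (\<alpha> + \<epsilon>)"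
      by (simp add: c_def powr_realpow[symmetric] powr_powr mult.commute)
    also have "\<dots> * U x \<le> c * y powr (\<alpha> + \<epsilon>) * U x"
      using j(1) \<alpha>_nonneg assms \<open>c \<ge> 1\<close> U_pos[of x]
      by (intro mult_right_mono mult_left_mono powr_mono2) auto
    finally show ?thesis .
  qed
  with \<open>x1 \<ge> 1\<close> show ?thesis
    using that unfolding c_def by blast
qed
lemma G_tail_negligible:
  assumes "filterlim h at_top at_top" and "((\<lambda>x. G_tail (f x) / F_tail (h x)) \<longlongrightarrow> 0) at_top" "e > 0"
  shows "\<forall>\<^sub>F x in at_top. G_tail (f x) \<le> e * U (h x)"
  using order_tendstoD(2)[OF assms(2,3)] filterlim_iff[THEN iffD1, OF assms(1), rule_format, OF eventually_F_tail_pos]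
proof eventually_elim
  case (elim x)
  then have "G_tail (f x) \<le> e * F_tail (h x)"
    by (simp add: divide_less_eq less_imp_le)
  also have "\<dots> \<le> e * U (h x)"
    using \<open>e > 0\<close> F_tail_le_U by (intro mult_left_mono) auto
  finally show ?case .
qed

lemma admissible_cut_case_i:
  assumes "\<epsilon> > 0" and G_F: "((\<lambda>x. G_tail x / F_tail x) \<longlongrightarrow> 0) at_top"
  shows "\<exists>c. admissible_cut (2 powr (\<alpha> + \<epsilon>)) (\<alpha> + \<epsilon>) t0 c"
proof -
  obtain x1 where "x1 \<ge> 1" and potter: "\<And>x y. 1 \<le> y \<Longrightarrow> y \<le> x / x1 \<Longrightarrow>
      U (x / y) \<le> 2 powr (\<alpha> + \<epsilon>) * y powr (\<alpha> + \<epsilon>) * U x"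
    using U_potter_bound[OF \<open>\<epsilon> > 0\<close>] by blast
  define t1 where "t1 = max t0 x1"
  have "t1 \<ge> t0" "t1 \<ge> x1" "t1 > 0"
    using \<open>x1 \<ge> 1\<close> by (auto simp: t1_def)
  have "\<forall>\<^sub>F x in at_top. t0 \<le> x / (x / t1) \<and> 1 \<le> x / t1 \<and>
      (\<forall>y. 1 \<le> y \<and> y \<le> x / t1 \<longrightarrow> U (x / y) \<le> 2 powr (\<alpha> + \<epsilon>) * y powr (\<alpha> + \<epsilon>) * U x)"
    using eventually_ge_at_top[of t1]
  proof eventually_elim
    case (elim x)
    then have "x / (x / t1) = t1" "x / t1 \<ge> 1" "x / t1 \<le> x / x1"
      using \<open>t1 > 0\<close> \<open>t1 \<ge> x1\<close> \<open>x1 \<ge> 1\<close> by (auto intro!: divide_left_mono)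
    then show ?case
      using \<open>t1 \<ge> t0\<close> potter by force
  qed
  moreover have "\<forall>\<^sub>F x in at_top. G_tail (x / t1) \<le> e * U x" if "e > 0" for e
  proof -
    have lim: "filterlim (\<lambda>x. x / t1) at_top at_top"
      using filterlim_mult_const_at_top[of "1 / t1"] \<open>t1 > 0\<close> by simp
    from G_tail_negligible[OF lim filterlim_compose[OF G_F lim], of "e / (2 * t1 powr \<alpha>)"]
    have "\<forall>\<^sub>F x in at_top. G_tail (x / t1) \<le> e / (2 * t1 powr \<alpha>) * U (x / t1)"
      using \<open>e > 0\<close> \<open>t1 > 0\<close> by simp
    moreover have "\<forall>\<^sub>F x in at_top. U (x / t1) \<le> (1 + 1) * t1 powr \<alpha> * U x"
      using U_div_upper[OF \<open>t1 > 0\<close>, of 1] by simp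
    ultimately show ?thesis
    proof eventually_elim
      case (elim x)
      have "e / (2 * t1 powr \<alpha>) * U (x / t1) \<le> e / (2 * t1 powr \<alpha>) * ((1 + 1) * t1 powr \<alpha> * U x)"
        using elim(2) \<open>e > 0\<close> by (intro mult_left_mono) auto
      then show ?case
        using elim(1) \<open>t1 > 0\<close> by simp
    qed
  qed
  ultimately have "admissible_cut (2 powr (\<alpha> + \<epsilon>)) (\<alpha> + \<epsilon>) t0 (\<lambda>x. x / t1)"
    unfolding admissible_cut_def by blast
  then show ?thesis by blast
qed

lemma U_regular_bounds:
  assumes L: "slowly_varying L" and F_L: "F_tail \<sim>[at_top] (\<lambda>x. x powr (- \<alpha>) * L x)"
  obtains T where "T > 0"
    and "\<And>t. t \<ge> T \<Longrightarrow> U t < 2 * (t powr (- \<alpha>) * L t)"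
    and "\<And>t. t \<ge> T \<Longrightarrow> t powr (- \<alpha>) * L t < 2 * U t"
proof -
  have L_pos: "L t > 0" if "t > 0" for t
    using L that by (simp add: slowly_varying_def)
  have "U \<sim>[at_top] F_tail"
    by (rule asymp_equiv_symI[OF asymp_equivI'[OF F_tail_U_ratio]])
  also note F_L
  finally have "U \<sim>[at_top] (\<lambda>x. x powr (- \<alpha>) * L x)" .
  moreover have "\<forall>x. U x \<noteq> 0 \<or> x powr (- \<alpha>) * L x \<noteq> 0"
    using U_pos by (metis less_irrefl)
  ultimately have "((\<lambda>x. U x / (x powr (- \<alpha>) * L x)) \<longlongrightarrow> 1) at_top"
    by (intro asymp_equivD_strong always_eventually)
  then have "\<forall>\<^sub>F t in at_top. 1 / 2 < U t / (t powr (- \<alpha>) * L t) \<and> U t / (t powr (- \<alpha>) * L t) < 2"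
    by (intro eventually_conj order_tendstoD) auto
  then obtain T0 where T0: "\<And>t. t \<ge> T0 \<Longrightarrow>
      1 / 2 < U t / (t powr (- \<alpha>) * L t) \<and> U t / (t powr (- \<alpha>) * L t) < 2"
    by (auto simp: eventually_at_top_linorder)
  show ?thesis
  proof (rule that[of "max T0 1"])
    fix t assume "t \<ge> max T0 1"
    then have "t powr (- \<alpha>) * L t > 0" "t \<ge> T0"
      using L_pos[of t] by auto
    with T0[of t] show "U t < 2 * (t powr (- \<alpha>) * L t)" "t powr (- \<alpha>) * L t < 2 * U t"
      by (simp_all add: divide_less_eq less_divide_eq)
  qed simp
qed

lemma U_div_le_of_regular_bounds:
  assumes "U (x / y) < 2 * ((x / y) powr (- \<alpha>) * L (x / y))" "x powr (- \<alpha>) * L x < 2 * U x"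
    and "x > 0" "y > 0" "L (x / y) \<le> C * L x" "C \<ge> 0"
  shows "U (x / y) \<le> 4 * C * y powr \<alpha> * U x"
proof -
  have "U (x / y) < 2 * (x powr (- \<alpha>) * y powr \<alpha>) * L (x / y)"
    using assms(1,3,4) by (simp add: powr_divide powr_minus field_simps)
  also have "\<dots> \<le> 2 * (x powr (- \<alpha>) * y powr \<alpha>) * (C * L x)"
    using assms(5) by (intro mult_left_mono) auto
  also have "\<dots> = 2 * C * y powr \<alpha> * (x powr (- \<alpha>) * L x)"
    by (simp add: mult_ac)
  also have "\<dots> \<le> 2 * C * y powr \<alpha> * (2 * U x)"
    using assms(2,6) by (intro mult_left_mono) auto
  finally show ?thesis by simp
qed

lemma admissible_cut_case_ii:
  assumes L: "slowly_varying L" and F_L: "F_tail \<sim>[at_top] (\<lambda>x. x powr (- \<alpha>) * L x)"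
    and g_pos: "\<forall>x>0. g x > 0" and g_lim: "(g \<longlongrightarrow> 0) at_top"
    and xg_lim: "filterlim (\<lambda>x. x * g x) at_top at_top"
    and G_F: "((\<lambda>x. G_tail (x * g x) / F_tail x) \<longlongrightarrow> 0) at_top"
    and L_bound: "\<forall>\<^sub>F x in at_top. \<forall>y. 1 \<le> y \<and> y \<le> x * g x \<longrightarrow> L (x / y) / L x \<le> C"
  shows "admissible_cut (4 * max C 0) \<alpha> t0 (\<lambda>x. x * g x)"
proof -
  obtain T where "T > 0" and U_upper: "\<And>t. t \<ge> T \<Longrightarrow> U t < 2 * (t powr (- \<alpha>) * L t)"
    and U_lower: "\<And>t. t \<ge> T \<Longrightarrow> t powr (- \<alpha>) * L t < 2 * U t"
    using U_regular_bounds[OF L F_L] by blast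
  have L_pos: "L t > 0" if "t > 0" for t
    using L that by (simp add: slowly_varying_def)
  define m where "m = max t0 T"
  have "m > 0" "m \<ge> t0" "m \<ge> T"
    using \<open>T > 0\<close> by (auto simp: m_def)
  have "\<forall>\<^sub>F x in at_top. g x < 1 / m"
    using g_lim \<open>m > 0\<close> by (intro order_tendstoD(2)) auto
  moreover have "\<forall>\<^sub>F x in at_top. x * g x \<ge> 1"
    using xg_lim by (simp add: filterlim_at_top)
  ultimately have "\<forall>\<^sub>F x in at_top. t0 \<le> x / (x * g x) \<and> 1 \<le> x * g x \<and>
      (\<forall>y. 1 \<le> y \<and> y \<le> x * g x \<longrightarrow> U (x / y) \<le> 4 * max C 0 * y powr \<alpha> * U x)"
    using L_bound eventually_ge_at_top[of T]
  proof eventually_elim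
    case (elim x)
    then have "x > 0" "g x > 0"
      using \<open>T > 0\<close> g_pos by auto
    then have "x / (x * g x) = 1 / g x" "m < 1 / g x"
      using elim(1) \<open>m > 0\<close> by (auto simp: field_simps)
    have "U (x / y) \<le> 4 * max C 0 * y powr \<alpha> * U x" if y: "1 \<le> y" "y \<le> x * g x" for y
    proof -
      have "x / (x * g x) \<le> x / y"
        using y \<open>x > 0\<close> by (intro divide_left_mono) auto
      then have "T \<le> x / y"
        using \<open>x / (x * g x) = 1 / g x\<close> \<open>m < 1 / g x\<close> \<open>m \<ge> T\<close> by linarith
      have "L (x / y) \<le> max C 0 * L x"
        using elim(3) y L_pos[OF \<open>x > 0\<close>] by (auto simp: divide_le_eq intro: order.trans[OF _ mult_right_mono])
      then show ?thesis
        using U_upper[OF \<open>T \<le> x / y\<close>] U_lower[OF elim(4)] \<open>x > 0\<close> y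
        by (intro U_div_le_of_regular_bounds) auto
    qed
    then show ?case
      using elim(2) \<open>x / (x * g x) = 1 / g x\<close> \<open>m < 1 / g x\<close> \<open>m \<ge> t0\<close> by auto
  qed
  moreover have "\<forall>\<^sub>F x in at_top. G_tail (x * g x) \<le> e * U x" if "e > 0" for e
    using G_tail_negligible[OF filterlim_ident _ that, of "\<lambda>x. x * g x"] G_F by simp
  ultimately show ?thesis
    unfolding admissible_cut_def by blast
qed

lemma integrable_s0_pow_mono:
  assumes "0 \<le> \<beta>" "\<beta> \<le> \<gamma>" and V: "integrable M (\<lambda>\<omega>. s0_pow \<gamma> (\<eta> \<omega>))"
  shows "integrable M (\<lambda>\<omega>. s0_pow \<beta> (\<eta> \<omega>))"
proof (rule Bochner_Integration.integrable_bound[OF Bochner_Integration.integrable_add[OF s0_integrable V]])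
  show "(\<lambda>\<omega>. s0_pow \<beta> (\<eta> \<omega>)) \<in> borel_measurable M"
    using borel_measurable_integrable[OF s0_integrable] unfolding s0_pow_def by measurable
  show "AE \<omega> in M. norm (s0_pow \<beta> (\<eta> \<omega>)) \<le> norm (s0 (\<eta> \<omega>) + s0_pow \<gamma> (\<eta> \<omega>))"
    using \<eta>_pos
  proof eventually_elim
    case (elim \<omega>)
    define y where "y = \<eta> \<omega>"
    have "y > 0" "s0 y > 0"
      using elim s0_pos by (auto simp: y_def)
    have "y powr \<beta> \<le> 1 + y powr \<gamma>"
    proof (cases "y \<le> 1")
      case True
      then have "y powr \<beta> \<le> 1"
        using \<open>y > 0\<close> \<open>0 \<le> \<beta>\<close> by (intro powr_le1) auto
      then show ?thesis by (simp add: add_increasing2)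
    next
      case False
      then have "y powr \<beta> \<le> y powr \<gamma>"
        by (intro powr_mono \<open>\<beta> \<le> \<gamma>\<close>) auto
      then show ?thesis
        by simp
    qed
    then have "y powr \<beta> * s0 y \<le> (1 + y powr \<gamma>) * s0 y"
      using \<open>s0 y > 0\<close> by (intro mult_right_mono) auto
    then show ?case
      using \<open>y > 0\<close> \<open>s0 y > 0\<close> by (simp add: s0_pow_def y_def[symmetric] algebra_simps)
  qed
qed

lemma tail_negligible_case_i:
  assumes "\<epsilon> > 0" and V: "integrable M (\<lambda>\<omega>. s0_pow (\<alpha> + \<epsilon>) (\<eta> \<omega>))"
    and "((\<lambda>x. G_tail x / F_tail x) \<longlongrightarrow> 0) at_top"
  shows tail_negligible
  using \<alpha>_nonneg assms(1) admissible_cut_case_i[OF assms(1,3)]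
  by (intro tail_negligible_by_cuts[OF _ V, of "2 powr (\<alpha> + \<epsilon>)"]) auto

lemma tail_negligible_case_ii:
  assumes W: "integrable M (\<lambda>\<omega>. s0_pow \<alpha> (\<eta> \<omega>))"
    and "slowly_varying L" "F_tail \<sim>[at_top] (\<lambda>x. x powr (- \<alpha>) * L x)"
    and "\<forall>x>0. g x > 0" "(g \<longlongrightarrow> 0) at_top" "filterlim (\<lambda>x. x * g x) at_top at_top"
    and "((\<lambda>x. G_tail (x * g x) / F_tail x) \<longlongrightarrow> 0) at_top"
    and "\<forall>\<^sub>F x in at_top. \<forall>y. 1 \<le> y \<and> y \<le> x * g x \<longrightarrow> L (x / y) / L x \<le> C"
  shows tail_negligible
proof (rule tail_negligible_by_cuts[OF \<alpha>_nonneg W, of "4 * max C 0"])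
  show "\<exists>c. admissible_cut (4 * max C 0) \<alpha> t0 c" for t0
    using admissible_cut_case_ii[OF assms(2-)] by blast
qed simp

end

theorem corollary2p4:
  fixes M :: "'a measure" and \<xi> \<eta> :: "'a \<Rightarrow> real"
    and s0 s L g :: "real \<Rightarrow> real" and \<alpha> :: real
  assumes "prob_space M"
    and "\<xi> \<in> borel_measurable M" and "\<eta> \<in> borel_measurable M"
    and "AE \<omega> in M. \<xi> \<omega> > 0" and "AE \<omega> in M. \<eta> \<omega> > 0"
    and "continuous_on {0<..} s0" and "\<forall>y>0. s0 y > 0"
    and "cond_dependent M \<xi> \<eta> s0"
    and "long_tailed (distr M borel \<xi>)"
    and "integrable M (\<lambda>\<omega>. s0 (\<eta> \<omega>))"
    and s_def: "s = (\<lambda>y. s0 y / (\<integral>\<omega>. s0 (\<eta> \<omega>) \<partial>M))"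
    and "\<alpha> \<ge> 0"
    and "reg_var \<alpha> (distr M borel (\<lambda>\<omega>. \<xi> \<omega> - \<eta> \<omega>))"
    and "slowly_varying L"
    and "ccdf (distr M borel (\<lambda>\<omega>. \<xi> \<omega> - \<eta> \<omega>)) \<sim>[at_top] (\<lambda>x. x powr (- \<alpha>) * L x)"
    and "((\<lambda>x. ccdf (distr M borel \<eta>) x / ccdf (distr M borel (\<lambda>\<omega>. \<xi> \<omega> - \<eta> \<omega>)) x)
            \<longlongrightarrow> 0) at_top"
    and "(\<exists>\<epsilon>>0. integrable M (\<lambda>\<omega>. \<eta> \<omega> powr (\<alpha> + \<epsilon>) * s (\<eta> \<omega>)))
         \<or> ((\<forall>x>0. g x > 0) \<and> antimono_on {0<..} g \<and> (g \<longlongrightarrow> 0) at_top \<and>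
            mono_on {0<..} (\<lambda>x. x * g x) \<and> filterlim (\<lambda>x. x * g x) at_top at_top \<and>
            ((\<lambda>x. ccdf (distr M borel \<eta>) (x * g x)
                   / ccdf (distr M borel (\<lambda>\<omega>. \<xi> \<omega> - \<eta> \<omega>)) x) \<longlongrightarrow> 0) at_top \<and>
            (\<exists>C. \<forall>\<^sub>F x in at_top. \<forall>y. 1 \<le> y \<and> y \<le> x * g x \<longrightarrow> L (x / y) / L x \<le> C) \<and>
            integrable M (\<lambda>\<omega>. \<eta> \<omega> powr \<alpha> * s (\<eta> \<omega>)))"
  shows "(\<lambda>x. measure M {\<omega> \<in> space M. (\<xi> \<omega> - \<eta> \<omega>) * \<eta> \<omega> > x})
           \<sim>[at_top] (\<lambda>x. (\<integral>\<omega>. \<eta> \<omega> powr \<alpha> * s (\<eta> \<omega>) \<partial>M)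
                          * ccdf (distr M borel (\<lambda>\<omega>. \<xi> \<omega> - \<eta> \<omega>)) x)"
proof -
  interpret cond_dep_rv M \<xi> \<eta> s0 \<alpha>
    using assms(7)
    by (intro cond_dep_rv.intro cond_dep.intro cond_dep_axioms.intro cond_dep_rv_axioms.intro
        assms(1-3,5,6,8-10,12,13)) auto
  have s_pow: "(\<lambda>\<omega>. \<eta> \<omega> powr \<beta> * s (\<eta> \<omega>)) = (\<lambda>\<omega>. s0_pow \<beta> (\<eta> \<omega>))" for \<beta>
    using s_def expectation_s0_eq_1 by (simp add: s0_pow_def)
  note hyps = assms(15-17)[unfolded ccdf_\<eta> ccdf_diff s_pow]
  from hyps(3) have "integrable M (\<lambda>\<omega>. s0_pow \<alpha> (\<eta> \<omega>)) \<and> tail_negligible"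
  proof (elim disjE exE conjE)
    fix \<epsilon> :: real assume "\<epsilon> > 0" and V: "integrable M (\<lambda>\<omega>. s0_pow (\<alpha> + \<epsilon>) (\<eta> \<omega>))"
    then show ?thesis
      using integrable_s0_pow_mono[OF \<alpha>_nonneg _ V] tail_negligible_case_i[OF _ V hyps(2)] by simp
  qed (use tail_negligible_case_ii[OF _ assms(14) hyps(1)] in blast)
  then show ?thesis
    using product_tail_asymp by (simp add: product_tail_def[abs_def] ccdf_diff s_pow)
qed

end
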